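(* Let $R$ be a commutative ring with identity. The following are equivalent: (1) $R[X]_A$ is a residually principal ideal ring; (2) $R[X]_A$ is a residually valuation ring; (3) $R[X]_A$ is a residually Bézout ring; (4) $R[X]_A$ is a residually Prüfer ring; (5) $R$ is zero-dimensional (i.e., has Krull dimension $0$).
   Context: $X$ is an indeterminate over $R$, $A=\{f\in R[X]\mid f(0)=1\}$, and $R[X]_A$ is the localization of $R[X]$ at $A$. For a property (P) of integral domains, a ring $T$ is called residually (P) if $T/\mathfrak p$ has property (P) for every prime ideal $\mathfrak p$ of $T$. Thus "residually principal ideal ring" means $T/\mathfrak p$ is a principal ideal domain for all primes $\mathfrak p$, and similarly for valuation domains, Bézout domains (every finitely generated ideal principal) and Prüfer domains (every nonzero finitely generated ideal invertible). *)

theory Defs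
  imports "HOL-Algebra.UnivPoly" "HOL-Algebra.Ideal_Product"
          "HOL-Algebra.Ring_Divisibility" "HOL-Algebra.QuotRing"
begin

text \<open>The operations are defined
  by taking the union over all representatives (which is the class itself once the
  operations are shown to be well defined).\<close>

definition loc_rel :: "('a, 'b) ring_scheme \<Rightarrow> 'a set \<Rightarrow> (('a \<times> 'a) \<times> ('a \<times> 'a)) set" where
  "loc_rel P S = {((a, s), (b, t)). a \<in> carrier P \<and> s \<in> S \<and> b \<in> carrier P \<and> t \<in> S \<and>
      (\<exists>u\<in>S. u \<otimes>\<^bsub>P\<^esub> ((a \<otimes>\<^bsub>P\<^esub> t) \<ominus>\<^bsub>P\<^esub> (b \<otimes>\<^bsub>P\<^esub> s)) = \<zero>\<^bsub>P\<^esub>)}"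

definition loc_frac :: "('a, 'b) ring_scheme \<Rightarrow> 'a set \<Rightarrow> 'a \<Rightarrow> 'a \<Rightarrow> ('a \<times> 'a) set" where
  "loc_frac P S a s = loc_rel P S `` {(a, s)}"

definition localization :: "('a, 'b) ring_scheme \<Rightarrow> 'a set \<Rightarrow> (('a \<times> 'a) set) ring" where
  "localization P S = ring.make
     \<comment> \<open>carrier\<close>
     {loc_frac P S a s | a s. a \<in> carrier P \<and> s \<in> S}
     \<comment> \<open>multiplication\<close>
     (\<lambda>U V. \<Union> {loc_frac P S (a \<otimes>\<^bsub>P\<^esub> b) (s \<otimes>\<^bsub>P\<^esub> t) | a s b t.
              (a, s) \<in> U \<and> (b, t) \<in> V})
     \<comment> \<open>one\<close>
     (loc_frac P S \<one>\<^bsub>P\<^esub> \<one>\<^bsub>P\<^esub>)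
     \<comment> \<open>zero\<close>
     (loc_frac P S \<zero>\<^bsub>P\<^esub> \<one>\<^bsub>P\<^esub>)
     \<comment> \<open>addition\<close>
     (\<lambda>U V. \<Union> {loc_frac P S ((a \<otimes>\<^bsub>P\<^esub> t) \<oplus>\<^bsub>P\<^esub> (b \<otimes>\<^bsub>P\<^esub> s)) (s \<otimes>\<^bsub>P\<^esub> t) | a s b t.
              (a, s) \<in> U \<and> (b, t) \<in> V})"

lemma localization_simps:
  "carrier (localization P S) = {loc_frac P S a s | a s. a \<in> carrier P \<and> s \<in> S}"
  "one (localization P S) = loc_frac P S \<one>\<^bsub>P\<^esub> \<one>\<^bsub>P\<^esub>"
  "zero (localization P S) = loc_frac P S \<zero>\<^bsub>P\<^esub> \<one>\<^bsub>P\<^esub>"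
  by (simp_all add: localization_def ring.defs)

definition polyA :: "('a, 'm) ring_scheme \<Rightarrow> (nat \<Rightarrow> 'a) set" where
  "polyA R = {f \<in> carrier (UP R). coeff (UP R) f 0 = \<one>\<^bsub>R\<^esub>}"

definition RXA :: "('a, 'm) ring_scheme \<Rightarrow> (((nat \<Rightarrow> 'a) \<times> (nat \<Rightarrow> 'a)) set) ring" where
  "RXA R = localization (UP R) (polyA R)"

definition valuation_domain :: "('a, 'b) ring_scheme \<Rightarrow> bool" where
  "valuation_domain D \<longleftrightarrow> domain D \<and>
     (\<forall>a\<in>carrier D. \<forall>b\<in>carrier D. a divides\<^bsub>D\<^esub> b \<or> b divides\<^bsub>D\<^esub> a)"

definition bezout_domain :: "('a, 'b) ring_scheme \<Rightarrow> bool" where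
  "bezout_domain D \<longleftrightarrow> domain D \<and>
     (\<forall>F. finite F \<and> F \<subseteq> carrier D \<longrightarrow> (\<exists>a\<in>carrier D. Idl\<^bsub>D\<^esub> F = PIdl\<^bsub>D\<^esub> a))"

text \<open>An ideal I of a domain D is invertible (as a fractional ideal) iff I J = d D
  for some ideal J of D and some nonzero d in D (J = d I^{-1}).\<close>

definition invertible_ideal :: "('a, 'b) ring_scheme \<Rightarrow> 'a set \<Rightarrow> bool" where
  "invertible_ideal D I \<longleftrightarrow>
     (\<exists>J d. ideal J D \<and> d \<in> carrier D \<and> d \<noteq> \<zero>\<^bsub>D\<^esub> \<and> ideal_prod D I J = PIdl\<^bsub>D\<^esub> d)"

definition prufer_domain :: "('a, 'b) ring_scheme \<Rightarrow> bool" where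
  "prufer_domain D \<longleftrightarrow> domain D \<and>
     (\<forall>F. finite F \<and> F \<subseteq> carrier D \<and> Idl\<^bsub>D\<^esub> F \<noteq> {\<zero>\<^bsub>D\<^esub>} \<longrightarrow>
        invertible_ideal D (Idl\<^bsub>D\<^esub> F))"

definition residually :: "(('a set) ring \<Rightarrow> bool) \<Rightarrow> ('a, 'b) ring_scheme \<Rightarrow> bool" where
  "residually Prop T \<longleftrightarrow> (\<forall>p. primeideal p T \<longrightarrow> Prop (T Quot p))"

definition zero_dimensional :: "('a, 'b) ring_scheme \<Rightarrow> bool" where
  "zero_dimensional R \<longleftrightarrow> (\<forall>p. primeideal p R \<longrightarrow> maximalideal p R)"

end

theory Submission
  imports Defs
begin

text \<open>Write $T = R[X]_A$. Evaluation at $0$ is a ring map $T \to R$, every element of $T$ has the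
  form $c + X G$ with $c \in R$, and an element with value $1$ at $0$ is a unit of $T$.

  If $R$ is zero-dimensional and $Q$ is a prime of $T$, the contraction $p$ of $Q$ to $R$ is
  maximal. An element $F$ with $F(0) \notin p$ becomes a unit modulo $Q$ (multiply by an inverse
  of $F(0)$ modulo $p$), while $F(0) \in p$ gives $F \equiv X G$ modulo $Q$. Induction on the degree
  shows that every nonzero element of $T/Q$ is a unit times a power of the class $x$ of $X$, so
  $T/Q$ is a principal ideal domain and a valuation domain, hence Bezout and Prufer.

  If $p$ is a non-maximal prime of $R$, pick $a \notin p$ in a proper ideal containing $p$ and
  let $Q = p[X]_A$. In $T/Q$ the class $x$ divides the class of $F$ exactly when $F(0) \in p$, so $x$
  is a nonzero prime element with $(x) \subsetneq (x, a) \subsetneq T/Q$. Then $a$ and $x$ are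
  incomparable under divisibility, and $(a, x)$ is not invertible, since an inverse would produce
  $u_1 + u_2 = 1$ with $u_1 x \in (a)$ and $u_2 a \in (x)$, forcing $x \mid 1 - c a$ for some $c$.\<close>

lemma (in cring) mult_diff_eq_zero_iff:
  assumes "u \<in> carrier R" "x \<in> carrier R" "y \<in> carrier R"
  shows "u \<otimes> (x \<ominus> y) = \<zero> \<longleftrightarrow> u \<otimes> x = u \<otimes> y"
proof -
  have "u \<otimes> (x \<ominus> y) = u \<otimes> x \<ominus> u \<otimes> y"
    using assms by (simp add: minus_eq r_distr r_minus)
  moreover have "a \<ominus> b = \<zero> \<longleftrightarrow> a = b" if "a \<in> carrier R" "b \<in> carrier R" for a b
    using that by (metis minus_eq r_neg add.inv_closed add.r_cancel_one' minus_minus minus_unique r_zero)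
  ultimately show ?thesis using assms by simp
qed

lemma (in ring) idealI':
  assumes "I \<subseteq> carrier R" "\<zero> \<in> I" "\<And>a b. a \<in> I \<Longrightarrow> b \<in> I \<Longrightarrow> a \<oplus> b \<in> I"
    "\<And>a. a \<in> I \<Longrightarrow> \<ominus> a \<in> I"
    "\<And>a x. a \<in> I \<Longrightarrow> x \<in> carrier R \<Longrightarrow> x \<otimes> a \<in> I"
    "\<And>a x. a \<in> I \<Longrightarrow> x \<in> carrier R \<Longrightarrow> a \<otimes> x \<in> I"
  shows "ideal I R"
proof (rule idealI[OF ring_axioms])
  show "subgroup I (add_monoid R)"
    using assms unfolding subgroup_def by (simp add: a_inv_def[symmetric])
qed (use assms in auto)

lemma (in ring) ideal_finsum_closed:
  assumes I: "ideal I R" and F: "finite F" and f: "\<And>k. k \<in> F \<Longrightarrow> f k \<in> I"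
  shows "finsum R f F \<in> I"
  using F f
proof (induct F rule: finite_induct)
  case empty then show ?case using I by (simp add: additive_subgroup.zero_closed ideal.axioms(1))
next
  case (insert k F)
  have "f \<in> F \<rightarrow> carrier R" "f k \<in> carrier R" using insert.prems ideal.Icarr[OF I] by auto
  then show ?case using insert I by (simp add: additive_subgroup.a_closed ideal.axioms(1))
qed

lemma ring_hom_Units:
  assumes h: "h \<in> ring_hom A B" and A: "monoid A" and u: "u \<in> Units A"
  shows "h u \<in> Units B"
proof -
  obtain v where v: "v \<in> carrier A" "v \<otimes>\<^bsub>A\<^esub> u = \<one>\<^bsub>A\<^esub>" "u \<otimes>\<^bsub>A\<^esub> v = \<one>\<^bsub>A\<^esub>" "u \<in> carrier A"
    using u unfolding Units_def by blast
  have "h v \<otimes>\<^bsub>B\<^esub> h u = \<one>\<^bsub>B\<^esub>" "h u \<otimes>\<^bsub>B\<^esub> h v = \<one>\<^bsub>B\<^esub>"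
    using v ring_hom_mult[OF h, of v u] ring_hom_mult[OF h, of u v] ring_hom_one[OF h] by simp_all
  moreover have "h u \<in> carrier B" "h v \<in> carrier B" using v ring_hom_closed[OF h] by simp_all
  ultimately show ?thesis unfolding Units_def by blast
qed

lemma (in ideal) FactRing_carrierE:
  assumes "y \<in> carrier (R Quot I)" obtains Y where "Y \<in> carrier R" "y = I +> Y"
  using assms unfolding FactRing_def A_RCOSETS_def' by auto

lemma (in ideal) FactRing_zero: "\<zero>\<^bsub>R Quot I\<^esub> = I"
  by (simp add: FactRing_def)

lemma (in ideal) rcos_eq_ideal_iff:
  assumes "Y \<in> carrier R" shows "I +> Y = I \<longleftrightarrow> Y \<in> I"
  using rcos_const_imp_mem[OF assms] a_rcos_zero[OF is_ideal] by blast

lemma (in cring) maximalideal_inverse_mod: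
  assumes M: "maximalideal p R" and c: "c \<in> carrier R" "c \<notin> p"
  obtains d where "d \<in> carrier R" "d \<otimes> c \<ominus> \<one> \<in> p"
proof -
  interpret M: maximalideal p R by (rule M)
  let ?J = "set_add R p (PIdl c)"
  have J: "ideal ?J R" by (rule add_ideals[OF M.is_ideal cgenideal_ideal[OF c(1)]])
  have "p \<subseteq> ?J"
  proof
    fix y assume y: "y \<in> p"
    have "\<zero> \<in> PIdl c"
      using cgenideal_ideal[OF c(1)] by (simp add: additive_subgroup.zero_closed ideal.axioms(1))
    moreover have "y = y \<oplus> \<zero>" using y M.Icarr by simp
    ultimately show "y \<in> ?J" using y unfolding set_add_def' by blast
  qed
  moreover have "c \<in> ?J"
  proof -
    have "c = \<zero> \<oplus> c" using c by simp
    then show ?thesis using cgenideal_self[OF c(1)] M.zero_closed unfolding set_add_def' by blast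
  qed
  ultimately have "?J = carrier R" using M.I_maximal[OF J] ideal.Icarr[OF J] c by blast
  then obtain y k where yk: "y \<in> p" "k \<in> PIdl c" "\<one> = y \<oplus> k" unfolding set_add_def' by blast
  then obtain d where d: "d \<in> carrier R" "k = d \<otimes> c" unfolding cgenideal_def by blast
  have "d \<otimes> c \<ominus> \<one> = \<ominus> y" using yk(3) d c M.Icarr[OF yk(1)] by algebra
  then show ?thesis using that d(1) M.a_inv_closed[OF yk(1)] by metis
qed

section \<open>Principal, valuation, Bezout and Prufer domains\<close>

lemma (in domain) principal_domain_imp_bezout_domain:
  "principal_domain R \<Longrightarrow> bezout_domain R"
  unfolding bezout_domain_def
  using domain_axioms genideal_ideal principal_domain.exists_gen by blast

lemma (in domain) bezout_domain_imp_prufer_domain: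
  assumes "bezout_domain R" shows "prufer_domain R"
  unfolding prufer_domain_def
proof (intro conjI allI impI domain_axioms)
  fix F assume F: "finite F \<and> F \<subseteq> carrier R \<and> Idl F \<noteq> {\<zero>}"
  then obtain a where a: "a \<in> carrier R" "Idl F = PIdl a"
    using assms unfolding bezout_domain_def by blast
  have "a \<noteq> \<zero>" using F a cgenideal_eq_genideal genideal_zero by auto
  moreover have "ideal_prod R (Idl F) (carrier R) = PIdl a"
    using a ideal_prod_one cgenideal_ideal by simp
  ultimately show "invertible_ideal R (Idl F)"
    unfolding invertible_ideal_def using a oneideal by blast
qed

definition unit_power_generated :: "('a, 'b) ring_scheme \<Rightarrow> 'a \<Rightarrow> bool" where
  "unit_power_generated D x \<longleftrightarrow>
     (\<forall>y\<in>carrier D. y = \<zero>\<^bsub>D\<^esub> \<or> (\<exists>u\<in>Units D. \<exists>n::nat. y = u \<otimes>\<^bsub>D\<^esub> x [^]\<^bsub>D\<^esub> n))"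

lemma (in cring) unit_mult_power_divides:
  fixes n m :: nat
  assumes "x \<in> carrier R" "u \<in> Units R" "v \<in> carrier R" "n \<le> m"
  shows "(u \<otimes> x [^] n) divides (v \<otimes> x [^] m)"
proof
  have "(u \<otimes> a) \<otimes> (inv u \<otimes> v \<otimes> b) = (u \<otimes> inv u) \<otimes> (v \<otimes> (a \<otimes> b))"
    if "a \<in> carrier R" "b \<in> carrier R" for a b
    using that assms Units_closed[OF assms(2)] Units_inv_closed[OF assms(2)] by algebra
  then have "(u \<otimes> x [^] n) \<otimes> (inv u \<otimes> v \<otimes> x [^] (m - n))
      = (u \<otimes> inv u) \<otimes> (v \<otimes> (x [^] n \<otimes> x [^] (m - n)))"
    using assms by simp
  also have "\<dots> = v \<otimes> x [^] m"
    using assms by (simp add: nat_pow_mult)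
  finally show "v \<otimes> x [^] m = (u \<otimes> x [^] n) \<otimes> (inv u \<otimes> v \<otimes> x [^] (m - n))" ..
  show "inv u \<otimes> v \<otimes> x [^] (m - n) \<in> carrier R"
    using assms by simp
qed

lemma (in domain) unit_power_generated_imp_principal_domain:
  assumes x: "x \<in> carrier R" and gen: "unit_power_generated R x"
  shows "principal_domain R"
proof (intro principal_domain.intro domain_axioms principal_domain_axioms.intro)
  fix I assume "ideal I R"
  then interpret I: ideal I R .
  have nf: "y = \<zero> \<or> (\<exists>u\<in>Units R. \<exists>n::nat. y = u \<otimes> x [^] n)" if "y \<in> I" for y
    using gen that I.Icarr unfolding unit_power_generated_def by blast
  have power_mem: "x [^] n \<in> I" if "u \<in> Units R" "u \<otimes> x [^] n \<in> I" for u and n :: nat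
  proof -
    have "x [^] n = inv u \<otimes> (u \<otimes> x [^] n)"
      using that x by (simp add: m_assoc[symmetric] Units_l_inv Units_closed)
    then show ?thesis using that I.I_l_closed Units_inv_closed by metis
  qed
  show "\<exists>a\<in>carrier R. I = PIdl a"
  proof (cases "\<exists>n::nat. x [^] n \<in> I")
    case False
    then have "I = PIdl \<zero>"
      using nf power_mem I.zero_closed cgenideal_eq_genideal genideal_zero by fastforce
    then show ?thesis by blast
  next
    case True
    define n0 where "n0 = (LEAST n::nat. x [^] n \<in> I)"
    have xI: "x [^] n0 \<in> I" unfolding n0_def using True by (rule LeastI_ex)
    have "I \<subseteq> PIdl (x [^] n0)"
    proof
      fix z assume z: "z \<in> I"
      from nf[OF z] show "z \<in> PIdl (x [^] n0)"
      proof
        assume "z = \<zero>" then show ?thesis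
          using x cgenideal_ideal ideal.Icarr additive_subgroup.zero_closed ideal.axioms(1)
          by (metis nat_pow_closed)
      next
        assume "\<exists>u\<in>Units R. \<exists>n::nat. z = u \<otimes> x [^] n"
        then obtain u and m :: nat where u: "u \<in> Units R" "z = u \<otimes> x [^] m" by blast
        then have "n0 \<le> m" unfolding n0_def using z power_mem by (blast intro: Least_le)
        then have "(\<one> \<otimes> x [^] n0) divides (u \<otimes> x [^] m)"
          by (rule unit_mult_power_divides[OF x Units_one_closed Units_closed[OF u(1)]])
        then show ?thesis
          using x u by (auto simp: factor_def cgenideal_def m_comm)
      qed
    qed
    moreover have "PIdl (x [^] n0) \<subseteq> I" unfolding cgenideal_def using xI I.I_l_closed by blast
    ultimately show ?thesis using x by blast
  qed
qed

lemma (in domain) unit_power_generated_imp_valuation_domain: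
  assumes x: "x \<in> carrier R" and gen: "unit_power_generated R x"
  shows "valuation_domain R"
  unfolding valuation_domain_def
proof (intro conjI ballI domain_axioms)
  fix a b assume ab: "a \<in> carrier R" "b \<in> carrier R"
  show "a divides b \<or> b divides a"
  proof (cases "a = \<zero> \<or> b = \<zero>")
    case True
    then show ?thesis using ab divides_zero by blast
  next
    case False
    then obtain u v and n m :: nat where "u \<in> Units R" "a = u \<otimes> x [^] n"
      and "v \<in> Units R" "b = v \<otimes> x [^] m"
      using gen ab unfolding unit_power_generated_def by meson
    then show ?thesis
      using unit_mult_power_divides[OF x] Units_closed by (metis nat_le_linear)
  qed
qed

lemma (in cring) pair_combinations_ideal:
  assumes J: "ideal J R" and a: "a \<in> carrier R" and x: "x \<in> carrier R"
  shows "ideal {a \<otimes> j1 \<oplus> x \<otimes> j2 | j1 j2. j1 \<in> J \<and> j2 \<in> J} R"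
proof -
  interpret J: ideal J R by (rule J)
  have [simp]: "j \<in> J \<Longrightarrow> j \<in> carrier R" for j using J.Icarr .
  show ?thesis
  proof (rule idealI')
    fix y z assume "y \<in> {a \<otimes> j1 \<oplus> x \<otimes> j2 | j1 j2. j1 \<in> J \<and> j2 \<in> J}"
      and z: "z \<in> {a \<otimes> j1 \<oplus> x \<otimes> j2 | j1 j2. j1 \<in> J \<and> j2 \<in> J}"
    then obtain j1 j2 k1 k2 where y: "y = a \<otimes> j1 \<oplus> x \<otimes> j2" "j1 \<in> J" "j2 \<in> J"
      and z: "z = a \<otimes> k1 \<oplus> x \<otimes> k2" "k1 \<in> J" "k2 \<in> J" by blast
    have "y \<oplus> z = a \<otimes> (j1 \<oplus> k1) \<oplus> x \<otimes> (j2 \<oplus> k2)"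
      unfolding y(1) z(1) using a x J.Icarr[OF y(2)] J.Icarr[OF y(3)] J.Icarr[OF z(2)] J.Icarr[OF z(3)]
      by algebra
    then show "y \<oplus> z \<in> {a \<otimes> j1 \<oplus> x \<otimes> j2 | j1 j2. j1 \<in> J \<and> j2 \<in> J}"
      using y z J.a_closed by blast
  next
    fix y z assume "y \<in> {a \<otimes> j1 \<oplus> x \<otimes> j2 | j1 j2. j1 \<in> J \<and> j2 \<in> J}" and z: "z \<in> carrier R"
    then obtain j1 j2 where y: "y = a \<otimes> j1 \<oplus> x \<otimes> j2" "j1 \<in> J" "j2 \<in> J" by blast
    have "z \<otimes> y = a \<otimes> (z \<otimes> j1) \<oplus> x \<otimes> (z \<otimes> j2)" "y \<otimes> z = a \<otimes> (z \<otimes> j1) \<oplus> x \<otimes> (z \<otimes> j2)"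
      unfolding y(1) using y z a x J.Icarr[OF y(2)] J.Icarr[OF y(3)] by algebra+
    then show "z \<otimes> y \<in> {a \<otimes> j1 \<oplus> x \<otimes> j2 | j1 j2. j1 \<in> J \<and> j2 \<in> J}"
      "y \<otimes> z \<in> {a \<otimes> j1 \<oplus> x \<otimes> j2 | j1 j2. j1 \<in> J \<and> j2 \<in> J}"
      using y z J.I_l_closed by blast+
  next
    fix y assume "y \<in> {a \<otimes> j1 \<oplus> x \<otimes> j2 | j1 j2. j1 \<in> J \<and> j2 \<in> J}"
    then obtain j1 j2 where y: "y = a \<otimes> j1 \<oplus> x \<otimes> j2" "j1 \<in> J" "j2 \<in> J" by blast
    have "\<ominus> y = a \<otimes> (\<ominus> j1) \<oplus> x \<otimes> (\<ominus> j2)"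
      unfolding y(1) using a x J.Icarr[OF y(2)] J.Icarr[OF y(3)] by algebra
    then show "\<ominus> y \<in> {a \<otimes> j1 \<oplus> x \<otimes> j2 | j1 j2. j1 \<in> J \<and> j2 \<in> J}"
      using y J.a_inv_closed by blast
  next
    have "\<zero> = a \<otimes> \<zero> \<oplus> x \<otimes> \<zero>" using a x by simp
    then show "\<zero> \<in> {a \<otimes> j1 \<oplus> x \<otimes> j2 | j1 j2. j1 \<in> J \<and> j2 \<in> J}" using J.zero_closed by blast
  qed (use a x in auto)
qed

lemma (in cring) ideal_prod_pair_memE:
  assumes J: "ideal J R" and a: "a \<in> carrier R" and x: "x \<in> carrier R"
    and y: "y \<in> ideal_prod R (Idl {a, x}) J"
  obtains j1 j2 where "j1 \<in> J" "j2 \<in> J" "y = a \<otimes> j1 \<oplus> x \<otimes> j2"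
proof -
  let ?comb = "\<lambda>J. {a \<otimes> j1 \<oplus> x \<otimes> j2 | j1 j2. j1 \<in> J \<and> j2 \<in> J}"
  have Idl_sub: "Idl {a, x} \<subseteq> ?comb (carrier R)"
  proof (rule genideal_minimal[OF pair_combinations_ideal[OF oneideal a x]])
    have "a = a \<otimes> \<one> \<oplus> x \<otimes> \<zero>" "x = a \<otimes> \<zero> \<oplus> x \<otimes> \<one>" using a x by simp_all
    then show "{a, x} \<subseteq> ?comb (carrier R)" by blast
  qed
  have prod_mem: "i \<otimes> j \<in> ?comb J" if i: "i \<in> Idl {a, x}" and j: "j \<in> J" for i j
  proof -
    obtain r s where rs: "i = a \<otimes> r \<oplus> x \<otimes> s" "r \<in> carrier R" "s \<in> carrier R"
      using Idl_sub i by blast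
    have "i \<otimes> j = a \<otimes> (r \<otimes> j) \<oplus> x \<otimes> (s \<otimes> j)"
      unfolding rs(1) using rs a x ideal.Icarr[OF J j] by algebra
    then show ?thesis using rs j ideal.I_l_closed[OF J] by blast
  qed
  have "Idl {a, x} <#> J \<subseteq> ?comb J" using prod_mem unfolding set_mult_def by blast
  then have "Idl (Idl {a, x} <#> J) \<subseteq> ?comb J"
    by (rule genideal_minimal[OF pair_combinations_ideal[OF J a x]])
  moreover have "ideal_prod R (Idl {a, x}) J = Idl (Idl {a, x} <#> J)"
    using ideal_prod_eq_genideal[OF genideal_ideal J] a x by simp
  ultimately show ?thesis using y that by blast
qed

text \<open>If $J$ is the ideal with $(a, x) J = (d)$, then $d^{-1} J$ is the inverse of $(a, x)$ and
  the quotients $a j/d$, $x j/d$ for $j \in J$ lie in the domain; writing $1 = (a j_1 + x j_2)/d$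
  gives a partition of unity adapted to $a$ and $x$.\<close>

lemma (in domain) invertible_pair_idealE:
  assumes a: "a \<in> carrier R" and x: "x \<in> carrier R" and inv: "invertible_ideal R (Idl {a, x})"
  obtains u1 u2 v w where "u1 \<in> carrier R" "u2 \<in> carrier R" "v \<in> carrier R" "w \<in> carrier R"
    "u1 \<oplus> u2 = \<one>" "u1 \<otimes> x = a \<otimes> w" "u2 \<otimes> a = x \<otimes> v"
proof -
  obtain J d where J: "ideal J R" and d: "d \<in> carrier R" "d \<noteq> \<zero>"
    and e: "ideal_prod R (Idl {a, x}) J = PIdl d"
    using inv unfolding invertible_ideal_def by blast
  have aI: "a \<in> Idl {a, x}" and xI: "x \<in> Idl {a, x}" using genideal_self[of "{a, x}"] a x by auto
  have quotient: "\<exists>u\<in>carrier R. i \<otimes> j = u \<otimes> d" if "i \<in> Idl {a, x}" "j \<in> J" for i j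
    using ideal_prod.prod[OF that, of R] e unfolding cgenideal_def by blast
  obtain j1 j2 where j: "j1 \<in> J" "j2 \<in> J" "d = a \<otimes> j1 \<oplus> x \<otimes> j2"
    using ideal_prod_pair_memE[OF J a x] e cgenideal_self[OF d(1)] by metis
  have jc: "j1 \<in> carrier R" "j2 \<in> carrier R" using j ideal.Icarr[OF J] by auto
  obtain u1 where u1: "u1 \<in> carrier R" "a \<otimes> j1 = u1 \<otimes> d" using quotient[OF aI j(1)] by blast
  obtain u2 where u2: "u2 \<in> carrier R" "x \<otimes> j2 = u2 \<otimes> d" using quotient[OF xI j(2)] by blast
  obtain v where v: "v \<in> carrier R" "a \<otimes> j2 = v \<otimes> d" using quotient[OF aI j(2)] by blast
  obtain w where w: "w \<in> carrier R" "x \<otimes> j1 = w \<otimes> d" using quotient[OF xI j(1)] by blast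
  have "(u1 \<oplus> u2) \<otimes> d = \<one> \<otimes> d" using j u1 u2 d by (simp add: l_distr)
  then have "u1 \<oplus> u2 = \<one>" using m_rcancel[OF d(2,1)] u1 u2 by (metis add.m_closed one_closed)
  moreover have "(u1 \<otimes> x) \<otimes> d = (a \<otimes> w) \<otimes> d"
  proof -
    have "(u1 \<otimes> x) \<otimes> d = x \<otimes> (a \<otimes> j1)" using u1 x d by (simp add: m_ac)
    also have "\<dots> = a \<otimes> (x \<otimes> j1)" using a x jc by (simp add: m_lcomm)
    finally show ?thesis using w a d by (simp add: m_ac)
  qed
  then have "u1 \<otimes> x = a \<otimes> w" using m_rcancel d u1 x a w by simp
  moreover have "(u2 \<otimes> a) \<otimes> d = (x \<otimes> v) \<otimes> d"
  proof -
    have "(u2 \<otimes> a) \<otimes> d = a \<otimes> (x \<otimes> j2)" using u2 a d by (simp add: m_ac)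
    also have "\<dots> = x \<otimes> (a \<otimes> j2)" using a x jc by (simp add: m_lcomm)
    finally show ?thesis using v x d by (simp add: m_ac)
  qed
  then have "u2 \<otimes> a = x \<otimes> v" using m_rcancel d u2 x a v by simp
  ultimately show ?thesis using that u1 u2 v w by blast
qed

lemma (in domain) ring_prime_divides_factor:
  assumes "ring_prime x" "b \<in> carrier R" "c \<in> carrier R" "x divides b \<otimes> c" "\<not> x divides b"
  shows "x divides c"
  using assms unfolding ring_prime_def prime_def by blast

text \<open>The hypotheses say that $(x)$ is a nonzero prime ideal strictly contained in the proper
  ideal $(x, a)$.\<close>

lemma (in domain) non_maximal_principal_prime_imp_not_valuation_domain:
  assumes a: "a \<in> carrier R" and x: "x \<in> carrier R" "ring_prime x"
    and not_dvd: "\<not> x divides a" "\<And>c. c \<in> carrier R \<Longrightarrow> \<not> x divides (\<one> \<ominus> c \<otimes> a)"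
  shows "\<not> valuation_domain R"
proof
  assume "valuation_domain R"
  then have "a divides x" using a x not_dvd(1) unfolding valuation_domain_def by blast
  then obtain c where c: "c \<in> carrier R" "x = a \<otimes> c" by (auto elim: dividesE)
  then have "x divides a \<otimes> c" using x(1) divides_refl by metis
  then obtain c' where c': "c' \<in> carrier R" "c = x \<otimes> c'"
    using ring_prime_divides_factor[OF x(2) a c(1)] not_dvd(1) by (auto elim: dividesE)
  have "x \<otimes> (c' \<otimes> a) = a \<otimes> c" using a x(1) c'(1) by (simp add: c'(2) m_ac)
  then have "x \<otimes> \<one> = x \<otimes> (c' \<otimes> a)" using c(2) x(1) by simp
  then have "\<one> = c' \<otimes> a"
    using m_lcancel x a c' ring_prime_def by (metis m_closed one_closed)
  then have "x divides (\<one> \<ominus> c' \<otimes> a)" using x(1) divides_zero by (simp add: a c' r_neg minus_eq)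
  then show False using not_dvd(2)[OF c'(1)] by blast
qed

lemma (in domain) non_maximal_principal_prime_imp_not_prufer_domain:
  assumes a: "a \<in> carrier R" and x: "x \<in> carrier R" "ring_prime x"
    and not_dvd: "\<not> x divides a" "\<And>c. c \<in> carrier R \<Longrightarrow> \<not> x divides (\<one> \<ominus> c \<otimes> a)"
  shows "\<not> prufer_domain R"
proof
  assume prufer: "prufer_domain R"
  have "x \<in> Idl {a, x}" using genideal_self[of "{a, x}"] a x by auto
  then have "Idl {a, x} \<noteq> {\<zero>}" using x(2) unfolding ring_prime_def by auto
  then have "invertible_ideal R (Idl {a, x})" using prufer a x unfolding prufer_domain_def by auto
  then obtain u1 u2 v w where uvw: "u1 \<in> carrier R" "u2 \<in> carrier R" "v \<in> carrier R" "w \<in> carrier R"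
    and partition: "u1 \<oplus> u2 = \<one>" and e1: "u1 \<otimes> x = a \<otimes> w" and e2: "u2 \<otimes> a = x \<otimes> v"
    by (rule invertible_pair_idealE[OF a x(1)])
  have "x divides a \<otimes> w" using e1 uvw x(1) by (metis dividesI m_comm)
  then obtain w' where w': "w' \<in> carrier R" "w = x \<otimes> w'"
    using ring_prime_divides_factor[OF x(2) a uvw(4)] not_dvd(1) by (auto elim: dividesE)
  have "x \<otimes> u1 = a \<otimes> w" using e1 uvw(1) x(1) by (simp add: m_comm)
  also have "\<dots> = x \<otimes> (w' \<otimes> a)" using a x(1) w'(1) by (simp add: w'(2) m_ac)
  finally have "x \<otimes> u1 = x \<otimes> (w' \<otimes> a)" .
  then have "u1 = w' \<otimes> a" using m_lcancel x uvw(1) a w' ring_prime_def by (metis m_closed)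
  moreover have "u2 = (u1 \<oplus> u2) \<ominus> u1" using uvw(1,2) by algebra
  ultimately have "u2 = \<one> \<ominus> w' \<otimes> a" using partition by simp
  moreover have "x divides u2 \<otimes> a" using e2 uvw x(1) by (metis dividesI)
  then have "x divides u2"
    using ring_prime_divides_factor[OF x(2) uvw(2) a] not_dvd(1) m_comm uvw(2) a by metis
  ultimately show False using not_dvd(2)[OF w'(1)] by simp
qed

section \<open>Rings of fractions\<close>

definition loc_extension :: "('a, 'b) ring_scheme \<Rightarrow> 'a set \<Rightarrow> 'a set \<Rightarrow> ('a \<times> 'a) set set" where
  "loc_extension P S Q = {loc_frac P S a s | a s. a \<in> Q \<and> s \<in> S}"

locale ring_of_fractions = cring P + S: submonoid S P for P (structure) and S
begin

lemma loc_rel_iff: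
  "((a, s), (b, t)) \<in> loc_rel P S \<longleftrightarrow> a \<in> carrier P \<and> s \<in> S \<and> b \<in> carrier P \<and> t \<in> S \<and>
     (\<exists>u\<in>S. u \<otimes> (a \<otimes> t) = u \<otimes> (b \<otimes> s))"
  unfolding loc_rel_def using mult_diff_eq_zero_iff S.mem_carrier by auto

lemma loc_rel_equiv: "equiv (carrier P \<times> S) (loc_rel P S)"
proof (rule equivI)
  show "refl_on (carrier P \<times> S) (loc_rel P S)"
    using S.one_closed unfolding refl_on_def loc_rel_def by (auto simp: mult_diff_eq_zero_iff S.mem_carrier)
  show "loc_rel P S \<subseteq> (carrier P \<times> S) \<times> carrier P \<times> S" unfolding loc_rel_def by auto
  show "sym (loc_rel P S)"
  proof (rule symI)
    fix x y assume "(x, y) \<in> loc_rel P S" then show "(y, x) \<in> loc_rel P S"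
      by (cases x, cases y) (auto simp: loc_rel_iff, metis)
  qed
  show "trans (loc_rel P S)"
  proof (rule transI)
    fix x y z assume xy: "(x, y) \<in> loc_rel P S" and yz: "(y, z) \<in> loc_rel P S"
    obtain a s where x: "x = (a, s)" by (cases x)
    obtain b t where y: "y = (b, t)" by (cases y)
    obtain c w where z: "z = (c, w)" by (cases z)
    from xy obtain u where u: "u \<in> S" "u \<otimes> (a \<otimes> t) = u \<otimes> (b \<otimes> s)" and
      c1: "a \<in> carrier P" "s \<in> S" "b \<in> carrier P" "t \<in> S"
      by (auto simp: loc_rel_iff x y)
    from yz obtain v where v: "v \<in> S" "v \<otimes> (b \<otimes> w) = v \<otimes> (c \<otimes> t)" and
      c2: "c \<in> carrier P" "w \<in> S"
      by (auto simp: loc_rel_iff z y)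
    note cs = c1 c2 u(1) v(1)
    have cc: "a \<in> carrier P" "s \<in> carrier P" "b \<in> carrier P" "t \<in> carrier P" "c \<in> carrier P" "w \<in> carrier P"
       "u \<in> carrier P" "v \<in> carrier P" using cs S.mem_carrier by auto
    have "(u \<otimes> v \<otimes> t) \<otimes> (a \<otimes> w) = (v \<otimes> w) \<otimes> (u \<otimes> (a \<otimes> t))" using cc by (simp add: m_ac)
    also have "\<dots> = (v \<otimes> w) \<otimes> (u \<otimes> (b \<otimes> s))" using u by simp
    also have "\<dots> = (u \<otimes> s) \<otimes> (v \<otimes> (b \<otimes> w))" using cc by (simp add: m_ac)
    also have "\<dots> = (u \<otimes> s) \<otimes> (v \<otimes> (c \<otimes> t))" using v by simp
    also have "\<dots> = (u \<otimes> v \<otimes> t) \<otimes> (c \<otimes> s)" using cc by (simp add: m_ac)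
    finally have "(u \<otimes> v \<otimes> t) \<otimes> (a \<otimes> w) = (u \<otimes> v \<otimes> t) \<otimes> (c \<otimes> s)" .
    moreover have "u \<otimes> v \<otimes> t \<in> S" using cs by (simp add: S.m_closed)
    ultimately show "(x, z) \<in> loc_rel P S" using cs by (auto simp: loc_rel_iff x z)
  qed
qed

lemma loc_frac_eq_iff:
  assumes "a \<in> carrier P" "s \<in> S" "b \<in> carrier P" "t \<in> S"
  shows "loc_frac P S a s = loc_frac P S b t \<longleftrightarrow> (\<exists>u\<in>S. u \<otimes> (a \<otimes> t) = u \<otimes> (b \<otimes> s))"
  unfolding loc_frac_def using eq_equiv_class_iff[OF loc_rel_equiv, of "(a,s)" "(b,t)"] assms
  by (simp add: loc_rel_iff)

lemma loc_frac_eqI: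
  assumes "a \<in> carrier P" "s \<in> S" "b \<in> carrier P" "t \<in> S" "a \<otimes> t = b \<otimes> s"
  shows "loc_frac P S a s = loc_frac P S b t"
  using assms loc_frac_eq_iff S.one_closed by metis

lemma mem_loc_fracD:
  assumes "(b, t) \<in> loc_frac P S a s"
  shows "loc_frac P S b t = loc_frac P S a s" "b \<in> carrier P" "t \<in> S"
proof -
  have r: "((a, s), (b, t)) \<in> loc_rel P S" using assms unfolding loc_frac_def by blast
  then show "b \<in> carrier P" "t \<in> S" by (auto simp: loc_rel_iff)
  show "loc_frac P S b t = loc_frac P S a s" unfolding loc_frac_def
    using r loc_rel_equiv by (metis equiv_class_eq symD equiv_def)
qed

lemma loc_frac_self_mem: "a \<in> carrier P \<Longrightarrow> s \<in> S \<Longrightarrow> (a, s) \<in> loc_frac P S a s"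
  unfolding loc_frac_def by (auto simp: loc_rel_iff)

text \<open>The operations of the localization are unions over all pairs of representatives;
  such a union is a single class once the operation on representatives respects the relation.\<close>

lemma Union_loc_frac_classes:
  assumes "a \<in> carrier P" "s \<in> S" "b \<in> carrier P" "t \<in> S"
    and cong: "\<And>a' s' b' t'. loc_frac P S a' s' = loc_frac P S a s \<Longrightarrow> loc_frac P S b' t' = loc_frac P S b t \<Longrightarrow>
      a' \<in> carrier P \<Longrightarrow> s' \<in> S \<Longrightarrow> b' \<in> carrier P \<Longrightarrow> t' \<in> S \<Longrightarrow> f a' s' b' t' = f a s b t"
  shows "\<Union>{f a' s' b' t' | a' s' b' t'. (a', s') \<in> loc_frac P S a s \<and> (b', t') \<in> loc_frac P S b t}
    = f a s b t"
proof -
  have "X = f a s b t"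
    if X_mem: "X \<in> {f a' s' b' t' | a' s' b' t'. (a', s') \<in> loc_frac P S a s \<and> (b', t') \<in> loc_frac P S b t}" for X
  proof -
    obtain a' s' b' t' where X: "X = f a' s' b' t'"
      and m: "(a', s') \<in> loc_frac P S a s" "(b', t') \<in> loc_frac P S b t"
      using X_mem by blast
    show ?thesis
      unfolding X by (rule cong[OF mem_loc_fracD(1)[OF m(1)] mem_loc_fracD(1)[OF m(2)]
          mem_loc_fracD(2,3)[OF m(1)] mem_loc_fracD(2,3)[OF m(2)]])
  qed
  moreover have "f a s b t \<in>
      {f a' s' b' t' | a' s' b' t'. (a', s') \<in> loc_frac P S a s \<and> (b', t') \<in> loc_frac P S b t}"
    using loc_frac_self_mem assms by blast
  ultimately show ?thesis by blast
qed

lemma loc_frac_mult_cong: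
  assumes "a \<in> carrier P" "s \<in> S" "b \<in> carrier P" "t \<in> S"
    and "loc_frac P S a' s' = loc_frac P S a s" "loc_frac P S b' t' = loc_frac P S b t"
    and "a' \<in> carrier P" "s' \<in> S" "b' \<in> carrier P" "t' \<in> S"
  shows "loc_frac P S (a' \<otimes> b') (s' \<otimes> t') = loc_frac P S (a \<otimes> b) (s \<otimes> t)"
proof -
  obtain u where u: "u \<in> S" "u \<otimes> (a' \<otimes> s) = u \<otimes> (a \<otimes> s')"
    using assms(5) loc_frac_eq_iff[of a' s' a s] assms(1,2,7,8) by blast
  obtain v where v: "v \<in> S" "v \<otimes> (b' \<otimes> t) = v \<otimes> (b \<otimes> t')"
    using assms(6) loc_frac_eq_iff[of b' t' b t] assms(3,4,9,10) by blast
  have "(u \<otimes> v) \<otimes> ((a' \<otimes> b') \<otimes> (s \<otimes> t)) = (u \<otimes> (a' \<otimes> s)) \<otimes> (v \<otimes> (b' \<otimes> t))"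
    using assms u(1) v(1) by (simp add: m_ac)
  also have "\<dots> = (u \<otimes> (a \<otimes> s')) \<otimes> (v \<otimes> (b \<otimes> t'))" using u v by simp
  also have "\<dots> = (u \<otimes> v) \<otimes> ((a \<otimes> b) \<otimes> (s' \<otimes> t'))" using assms u(1) v(1) by (simp add: m_ac)
  finally show ?thesis
    using assms u v by (subst loc_frac_eq_iff) (auto intro!: bexI[of _ "u \<otimes> v"])
qed

lemma loc_frac_add_cong:
  assumes "a \<in> carrier P" "s \<in> S" "b \<in> carrier P" "t \<in> S"
    and "loc_frac P S a' s' = loc_frac P S a s" "loc_frac P S b' t' = loc_frac P S b t"
    and "a' \<in> carrier P" "s' \<in> S" "b' \<in> carrier P" "t' \<in> S"
  shows "loc_frac P S (a' \<otimes> t' \<oplus> b' \<otimes> s') (s' \<otimes> t') = loc_frac P S (a \<otimes> t \<oplus> b \<otimes> s) (s \<otimes> t)"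
proof -
  obtain u where u: "u \<in> S" "u \<otimes> (a' \<otimes> s) = u \<otimes> (a \<otimes> s')"
    using assms(5) loc_frac_eq_iff[of a' s' a s] assms(1,2,7,8) by blast
  obtain v where v: "v \<in> S" "v \<otimes> (b' \<otimes> t) = v \<otimes> (b \<otimes> t')"
    using assms(6) loc_frac_eq_iff[of b' t' b t] assms(3,4,9,10) by blast
  have "(u \<otimes> v) \<otimes> ((a' \<otimes> t' \<oplus> b' \<otimes> s') \<otimes> (s \<otimes> t))
      = (u \<otimes> (a' \<otimes> s)) \<otimes> (v \<otimes> t' \<otimes> t) \<oplus> (v \<otimes> (b' \<otimes> t)) \<otimes> (u \<otimes> s' \<otimes> s)"
    using assms u(1) v(1) by (simp add: m_ac l_distr r_distr)
  also have "\<dots> = (u \<otimes> (a \<otimes> s')) \<otimes> (v \<otimes> t' \<otimes> t) \<oplus> (v \<otimes> (b \<otimes> t')) \<otimes> (u \<otimes> s' \<otimes> s)"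
    using u v by simp
  also have "\<dots> = (u \<otimes> v) \<otimes> ((a \<otimes> t \<oplus> b \<otimes> s) \<otimes> (s' \<otimes> t'))"
    using assms u(1) v(1) by (simp add: m_ac l_distr r_distr)
  finally show ?thesis
    using assms u v by (subst loc_frac_eq_iff) (auto intro!: bexI[of _ "u \<otimes> v"])
qed

lemma localization_mult:
  assumes "a \<in> carrier P" "s \<in> S" "b \<in> carrier P" "t \<in> S"
  shows "loc_frac P S a s \<otimes>\<^bsub>localization P S\<^esub> loc_frac P S b t = loc_frac P S (a \<otimes> b) (s \<otimes> t)"
  by (simp add: localization_def ring.defs
      Union_loc_frac_classes[where f = "\<lambda>a s b t. loc_frac P S (a \<otimes> b) (s \<otimes> t)",
        OF assms loc_frac_mult_cong[OF assms]])

lemma localization_add: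
  assumes "a \<in> carrier P" "s \<in> S" "b \<in> carrier P" "t \<in> S"
  shows "loc_frac P S a s \<oplus>\<^bsub>localization P S\<^esub> loc_frac P S b t
    = loc_frac P S (a \<otimes> t \<oplus> b \<otimes> s) (s \<otimes> t)"
  by (simp add: localization_def ring.defs
      Union_loc_frac_classes[where f = "\<lambda>a s b t. loc_frac P S (a \<otimes> t \<oplus> b \<otimes> s) (s \<otimes> t)",
        OF assms loc_frac_add_cong[OF assms]])

lemma loc_frac_closed: "a \<in> carrier P \<Longrightarrow> s \<in> S \<Longrightarrow> loc_frac P S a s \<in> carrier (localization P S)"
  by (auto simp: localization_simps(1))

lemma localization_carrierE:
  assumes "F \<in> carrier (localization P S)"
  obtains a s where "F = loc_frac P S a s" "a \<in> carrier P" "s \<in> S"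
  using assms by (auto simp: localization_simps(1))

lemma localization_zero: "\<zero>\<^bsub>localization P S\<^esub> = loc_frac P S \<zero> \<one>" by (simp add: localization_simps)
lemma localization_one: "\<one>\<^bsub>localization P S\<^esub> = loc_frac P S \<one> \<one>" by (simp add: localization_simps)

lemma localization_abelian_group: "abelian_group (localization P S)"
proof (rule abelian_groupI)
  fix x y assume "x \<in> carrier (localization P S)" "y \<in> carrier (localization P S)"
  then show "x \<oplus>\<^bsub>localization P S\<^esub> y \<in> carrier (localization P S)"
    by (elim localization_carrierE) (simp add: localization_add loc_frac_closed)
next
  show "\<zero>\<^bsub>localization P S\<^esub> \<in> carrier (localization P S)"
    by (simp add: localization_zero loc_frac_closed)
next
  fix x y z
  assume "x \<in> carrier (localization P S)" "y \<in> carrier (localization P S)" "z \<in> carrier (localization P S)"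
  then show "x \<oplus>\<^bsub>localization P S\<^esub> y \<oplus>\<^bsub>localization P S\<^esub> z =
      x \<oplus>\<^bsub>localization P S\<^esub> (y \<oplus>\<^bsub>localization P S\<^esub> z)"
    by (elim localization_carrierE) (simp add: localization_add, rule loc_frac_eqI,
        simp_all add: m_ac a_ac l_distr r_distr)
next
  fix x y assume "x \<in> carrier (localization P S)" "y \<in> carrier (localization P S)"
  then show "x \<oplus>\<^bsub>localization P S\<^esub> y = y \<oplus>\<^bsub>localization P S\<^esub> x"
    by (elim localization_carrierE) (simp add: localization_add, rule loc_frac_eqI,
        simp_all add: m_ac a_ac)
next
  fix x assume "x \<in> carrier (localization P S)"
  then show "\<zero>\<^bsub>localization P S\<^esub> \<oplus>\<^bsub>localization P S\<^esub> x = x"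
    by (elim localization_carrierE) (simp add: localization_zero localization_add)
next
  fix x assume "x \<in> carrier (localization P S)"
  then obtain a s where x: "x = loc_frac P S a s" "a \<in> carrier P" "s \<in> S"
    by (rule localization_carrierE)
  have "loc_frac P S (\<ominus> a) s \<oplus>\<^bsub>localization P S\<^esub> x = \<zero>\<^bsub>localization P S\<^esub>"
    using x by (simp add: localization_zero localization_add) (rule loc_frac_eqI; simp add: l_minus l_neg)
  moreover have "loc_frac P S (\<ominus> a) s \<in> carrier (localization P S)" using x by (simp add: loc_frac_closed)
  ultimately show "\<exists>y\<in>carrier (localization P S). y \<oplus>\<^bsub>localization P S\<^esub> x = \<zero>\<^bsub>localization P S\<^esub>"
    by blast
qed

lemma localization_comm_monoid: "comm_monoid (localization P S)"
proof (rule comm_monoidI)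
  fix x y assume "x \<in> carrier (localization P S)" "y \<in> carrier (localization P S)"
  then show "x \<otimes>\<^bsub>localization P S\<^esub> y \<in> carrier (localization P S)"
    by (elim localization_carrierE) (simp add: localization_mult loc_frac_closed)
next
  show "\<one>\<^bsub>localization P S\<^esub> \<in> carrier (localization P S)"
    by (simp add: localization_one loc_frac_closed)
next
  fix x y z
  assume "x \<in> carrier (localization P S)" "y \<in> carrier (localization P S)" "z \<in> carrier (localization P S)"
  then show "x \<otimes>\<^bsub>localization P S\<^esub> y \<otimes>\<^bsub>localization P S\<^esub> z =
      x \<otimes>\<^bsub>localization P S\<^esub> (y \<otimes>\<^bsub>localization P S\<^esub> z)"
    by (elim localization_carrierE) (simp add: localization_mult m_assoc)
next
  fix x assume "x \<in> carrier (localization P S)"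
  then show "\<one>\<^bsub>localization P S\<^esub> \<otimes>\<^bsub>localization P S\<^esub> x = x"
    by (elim localization_carrierE) (simp add: localization_one localization_mult)
next
  fix x y assume "x \<in> carrier (localization P S)" "y \<in> carrier (localization P S)"
  then show "x \<otimes>\<^bsub>localization P S\<^esub> y = y \<otimes>\<^bsub>localization P S\<^esub> x"
    by (elim localization_carrierE) (simp add: localization_mult m_comm)
qed

lemma localization_cring: "cring (localization P S)"
proof (rule cringI[OF localization_abelian_group localization_comm_monoid])
  fix x y z
  assume "x \<in> carrier (localization P S)" "y \<in> carrier (localization P S)" "z \<in> carrier (localization P S)"
  then show "(x \<oplus>\<^bsub>localization P S\<^esub> y) \<otimes>\<^bsub>localization P S\<^esub> z =
      x \<otimes>\<^bsub>localization P S\<^esub> z \<oplus>\<^bsub>localization P S\<^esub> y \<otimes>\<^bsub>localization P S\<^esub> z"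
    by (elim localization_carrierE) (simp add: localization_add localization_mult, rule loc_frac_eqI,
        simp_all add: m_ac a_ac l_distr r_distr)
qed

lemma localization_minus:
  assumes "a \<in> carrier P" "s \<in> S"
  shows "\<ominus>\<^bsub>localization P S\<^esub> loc_frac P S a s = loc_frac P S (\<ominus> a) s"
proof -
  interpret L: cring "localization P S" by (rule localization_cring)
  have "loc_frac P S (\<ominus> a) s \<oplus>\<^bsub>localization P S\<^esub> loc_frac P S a s = \<zero>\<^bsub>localization P S\<^esub>"
    using assms by (simp add: localization_zero localization_add S.m_closed S.mem_carrier)
            (rule loc_frac_eqI; simp add: S.m_closed S.one_closed S.mem_carrier l_minus l_neg)
  then show ?thesis
    using L.sum_zero_eq_neg assms by (metis loc_frac_closed add.inv_closed)
qed

lemma loc_frac_ring_hom: "(\<lambda>a. loc_frac P S a \<one>) \<in> ring_hom P (localization P S)"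
  by (rule ring_hom_memI) (auto simp: loc_frac_closed S.one_closed localization_mult localization_add localization_one)

lemma loc_frac_ring_hom_ring: "ring_hom_ring P (localization P S) (\<lambda>a. loc_frac P S a \<one>)"
  by (rule ring_hom_ringI2[OF ring_axioms cring.axioms(1)[OF localization_cring] loc_frac_ring_hom])

lemma loc_frac_split:
  assumes "a \<in> carrier P" "s \<in> S"
  shows "loc_frac P S a s = loc_frac P S a \<one> \<otimes>\<^bsub>localization P S\<^esub> loc_frac P S \<one> s"
  using assms by (simp add: localization_mult S.one_closed S.mem_carrier)

lemma loc_frac_mult_inverse:
  assumes "s \<in> S"
  shows "loc_frac P S s \<one> \<otimes>\<^bsub>localization P S\<^esub> loc_frac P S \<one> s = \<one>\<^bsub>localization P S\<^esub>"
  using assms by (simp add: localization_mult localization_one) (rule loc_frac_eqI; simp)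

lemma loc_frac_Units:
  assumes "s \<in> S"
  shows "loc_frac P S s \<one> \<in> Units (localization P S)" "loc_frac P S \<one> s \<in> Units (localization P S)"
proof -
  interpret L: cring "localization P S" by (rule localization_cring)
  have c: "loc_frac P S s \<one> \<in> carrier (localization P S)" "loc_frac P S \<one> s \<in> carrier (localization P S)"
    using assms by (auto simp: loc_frac_closed)
  moreover note e = loc_frac_mult_inverse[OF assms]
  moreover have "loc_frac P S \<one> s \<otimes>\<^bsub>localization P S\<^esub> loc_frac P S s \<one> = \<one>\<^bsub>localization P S\<^esub>"
    using e L.m_comm c by simp
  ultimately show
    "loc_frac P S s \<one> \<in> Units (localization P S)" "loc_frac P S \<one> s \<in> Units (localization P S)"
    unfolding Units_def by blast+
qed

context
  fixes Q assumes Q: "primeideal Q P" and QS: "Q \<inter> S = {}"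
begin

lemma loc_extension_mem_iff:
  assumes "a \<in> carrier P" "s \<in> S"
  shows "loc_frac P S a s \<in> loc_extension P S Q \<longleftrightarrow> a \<in> Q"
proof
  assume "a \<in> Q" then show "loc_frac P S a s \<in> loc_extension P S Q" using assms unfolding loc_extension_def by blast
next
  interpret Q: primeideal Q P by (rule Q)
  assume "loc_frac P S a s \<in> loc_extension P S Q"
  then obtain b t where bt: "b \<in> Q" "t \<in> S" "loc_frac P S a s = loc_frac P S b t"
    unfolding loc_extension_def by blast
  then obtain u where u: "u \<in> S" "u \<otimes> (a \<otimes> t) = u \<otimes> (b \<otimes> s)"
    using loc_frac_eq_iff[of a s b t] assms Q.Icarr by blast
  have "u \<otimes> (a \<otimes> t) \<in> Q"
    unfolding u(2) using bt u(1) assms by (simp add: Q.I_l_closed Q.I_r_closed)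
  then have "u \<in> Q \<or> a \<in> Q \<or> t \<in> Q"
    using Q.I_prime u(1) assms bt(2) by (metis S.mem_carrier m_closed)
  then show "a \<in> Q" using QS u(1) bt(2) by blast
qed

lemma loc_extension_ideal: "ideal (loc_extension P S Q) (localization P S)"
proof -
  interpret L: cring "localization P S" by (rule localization_cring)
  interpret Q: primeideal Q P by (rule Q)
  have Qc: "a \<in> Q \<Longrightarrow> a \<in> carrier P" for a using Q.Icarr by blast
  show ?thesis
  proof (rule L.idealI')
    show "loc_extension P S Q \<subseteq> carrier (localization P S)"
      unfolding loc_extension_def using loc_frac_closed Qc by auto
    show "\<zero>\<^bsub>localization P S\<^esub> \<in> loc_extension P S Q"
      unfolding loc_extension_def localization_zero using S.one_closed Q.zero_closed by blast
  next
    fix x y assume "x \<in> loc_extension P S Q" "y \<in> loc_extension P S Q"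
    then obtain a s b t where "x = loc_frac P S a s" "a \<in> Q" "s \<in> S" "y = loc_frac P S b t" "b \<in> Q" "t \<in> S"
      unfolding loc_extension_def by blast
    then show "x \<oplus>\<^bsub>localization P S\<^esub> y \<in> loc_extension P S Q"
      using Qc by (simp add: localization_add) (auto simp: loc_extension_mem_iff Q.I_r_closed)
  next
    fix x assume "x \<in> loc_extension P S Q"
    then obtain a s where "x = loc_frac P S a s" "a \<in> Q" "s \<in> S" unfolding loc_extension_def by blast
    then show "\<ominus>\<^bsub>localization P S\<^esub> x \<in> loc_extension P S Q"
      using Qc by (simp add: localization_minus loc_extension_mem_iff Q.a_inv_closed)
  next
    fix x y assume "x \<in> loc_extension P S Q" "y \<in> carrier (localization P S)"
    then obtain a s b t where "x = loc_frac P S a s" "a \<in> Q" "s \<in> S"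
      "y = loc_frac P S b t" "b \<in> carrier P" "t \<in> S"
      unfolding loc_extension_def by (blast elim: localization_carrierE)
    then show "y \<otimes>\<^bsub>localization P S\<^esub> x \<in> loc_extension P S Q"
      "x \<otimes>\<^bsub>localization P S\<^esub> y \<in> loc_extension P S Q"
      using Qc by (simp_all add: localization_mult loc_extension_mem_iff Q.I_r_closed Q.I_l_closed)
  qed
qed

lemma loc_extension_primeideal: "primeideal (loc_extension P S Q) (localization P S)"
proof (rule primeidealI[OF loc_extension_ideal localization_cring])
  interpret Q: primeideal Q P by (rule Q)
  have "\<one> \<notin> Q" using Q.I_notcarr Q.one_imp_carrier by blast
  then show "carrier (localization P S) \<noteq> loc_extension P S Q"
    using loc_frac_closed[of \<one> \<one>] loc_extension_mem_iff[of \<one> \<one>] by auto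
next
  fix x y assume "x \<in> carrier (localization P S)" "y \<in> carrier (localization P S)"
    and xy: "x \<otimes>\<^bsub>localization P S\<^esub> y \<in> loc_extension P S Q"
  then obtain a s b t where "x = loc_frac P S a s" "a \<in> carrier P" "s \<in> S"
    "y = loc_frac P S b t" "b \<in> carrier P" "t \<in> S"
    by (blast elim: localization_carrierE)
  then show "x \<in> loc_extension P S Q \<or> y \<in> loc_extension P S Q"
    using xy primeideal.I_prime[OF Q] by (simp add: localization_mult loc_extension_mem_iff)
qed

end
end

section \<open>The ring $R[X]_A$\<close>

context UP_cring
begin

lemma polyA_mem_iff: "s \<in> polyA R \<longleftrightarrow> s \<in> carrier P \<and> coeff P s 0 = \<one>"
  by (simp add: polyA_def P_def)

lemma polyA_submonoid: "submonoid (polyA R) P"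
  by (rule submonoid.intro) (auto simp: polyA_mem_iff)

end

sublocale UP_cring \<subseteq> A: ring_of_fractions P "polyA R"
  by (intro ring_of_fractions.intro UP_cring polyA_submonoid)

abbreviation (in UP_cring) T where "T \<equiv> localization P (polyA R)"

definition poly_shift :: "(nat \<Rightarrow> 'a) \<Rightarrow> nat \<Rightarrow> 'a" where
  "poly_shift f = (\<lambda>n. f (Suc n))"

text \<open>Evaluation at $X = 0$ on $R[X]_A$: the value $f(0)$ at a representative $(f, s)$ does not
  depend on the representative because $s(0) = 1$.\<close>

definition loc_eval0 :: "('a, 'm) ring_scheme \<Rightarrow> ((nat \<Rightarrow> 'a) \<times> (nat \<Rightarrow> 'a)) set \<Rightarrow> 'a" where
  "loc_eval0 R F = coeff (UP R) (fst (SOME x. x \<in> F)) 0"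

context UP_cring
begin

lemma loc_eval0_frac:
  assumes f: "f \<in> carrier P" and s: "s \<in> polyA R"
  shows "loc_eval0 R (loc_frac P (polyA R) f s) = coeff P f 0"
proof -
  obtain g t where gt: "(SOME x. x \<in> loc_frac P (polyA R) f s) = (g, t)" by fastforce
  have "(g, t) \<in> loc_frac P (polyA R) f s"
    unfolding gt[symmetric] using A.loc_frac_self_mem[OF f s] by (rule someI)
  then have g: "g \<in> carrier P" and t: "t \<in> polyA R"
    and "loc_frac P (polyA R) g t = loc_frac P (polyA R) f s"
    using A.mem_loc_fracD by auto
  then obtain u where u: "u \<in> polyA R" "u \<otimes>\<^bsub>P\<^esub> (g \<otimes>\<^bsub>P\<^esub> s) = u \<otimes>\<^bsub>P\<^esub> (f \<otimes>\<^bsub>P\<^esub> t)"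
    using A.loc_frac_eq_iff[OF g t f s] by blast
  have "coeff P (u \<otimes>\<^bsub>P\<^esub> (g \<otimes>\<^bsub>P\<^esub> s)) 0 = coeff P (u \<otimes>\<^bsub>P\<^esub> (f \<otimes>\<^bsub>P\<^esub> t)) 0" using u by simp
  then have "coeff P g 0 = coeff P f 0"
    using u(1) s t f g by (simp add: polyA_mem_iff)
  then show ?thesis unfolding loc_eval0_def using gt by (simp add: P_def)
qed

lemma loc_eval0_ring_hom: "loc_eval0 R \<in> ring_hom T R"
proof (rule ring_hom_memI)
  fix x assume "x \<in> carrier T"
  then show "loc_eval0 R x \<in> carrier R" by (elim A.localization_carrierE) (simp add: loc_eval0_frac)
next
  fix x y assume "x \<in> carrier T" "y \<in> carrier T"
  then show "loc_eval0 R (x \<otimes>\<^bsub>T\<^esub> y) = loc_eval0 R x \<otimes> loc_eval0 R y"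
    "loc_eval0 R (x \<oplus>\<^bsub>T\<^esub> y) = loc_eval0 R x \<oplus> loc_eval0 R y"
    by (elim A.localization_carrierE;
        simp add: A.localization_mult A.localization_add loc_eval0_frac polyA_mem_iff)+
next
  show "loc_eval0 R \<one>\<^bsub>T\<^esub> = \<one>"
    by (simp add: A.localization_one loc_eval0_frac)
qed

lemma loc_eval0_ring_hom_ring: "ring_hom_ring T R (loc_eval0 R)"
  by (rule ring_hom_ringI2[OF cring.axioms(1)[OF A.localization_cring] R.ring_axioms loc_eval0_ring_hom])

definition loc_const where "loc_const c = loc_frac P (polyA R) (monom P c 0) \<one>\<^bsub>P\<^esub>"

definition loc_X where "loc_X = loc_frac P (polyA R) (monom P \<one> 1) \<one>\<^bsub>P\<^esub>"

lemma loc_const_ring_hom: "loc_const \<in> ring_hom R T"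
proof -
  have "(\<lambda>a. loc_frac P (polyA R) a \<one>\<^bsub>P\<^esub>) \<circ> (\<lambda>a. monom P a 0) \<in> ring_hom R T"
    by (rule ring_hom_trans[OF const_ring_hom A.loc_frac_ring_hom])
  then show ?thesis unfolding loc_const_def o_def by simp
qed

lemma loc_const_ring_hom_ring: "ring_hom_ring R T loc_const"
  by (rule ring_hom_ringI2[OF R.ring_axioms cring.axioms(1)[OF A.localization_cring] loc_const_ring_hom])

lemma loc_X_closed: "loc_X \<in> carrier T"
  unfolding loc_X_def by (simp add: A.loc_frac_closed)

lemma loc_eval0_const: "c \<in> carrier R \<Longrightarrow> loc_eval0 R (loc_const c) = c"
  unfolding loc_const_def by (simp add: loc_eval0_frac)

lemma loc_eval0_X: "loc_eval0 R loc_X = \<zero>"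
  unfolding loc_X_def by (simp add: loc_eval0_frac)

lemma poly_shift_closed:
  assumes f: "f \<in> carrier P" shows "poly_shift f \<in> carrier P"
proof -
  have fu: "f \<in> up R" using f by (simp add: P_def UP_def)
  then obtain N where "bound \<zero> N f" by blast
  then have "bound \<zero> N (poly_shift f)" unfolding bound_def poly_shift_def by simp
  moreover have "poly_shift f n \<in> carrier R" for n using fu unfolding poly_shift_def by blast
  ultimately show ?thesis by (auto simp: P_def UP_def)
qed

lemma coeff_poly_shift: "f \<in> carrier P \<Longrightarrow> coeff P (poly_shift f) n = coeff P f (Suc n)"
  using poly_shift_closed by (simp add: P_def UP_def poly_shift_def)

lemma poly_shift_decomp:
  assumes f: "f \<in> carrier P"
  shows "f = monom P (coeff P f 0) 0 \<oplus>\<^bsub>P\<^esub> monom P \<one> 1 \<otimes>\<^bsub>P\<^esub> poly_shift f"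
proof (rule up_eqI)
  fix n
  show "coeff P f n = coeff P (monom P (coeff P f 0) 0 \<oplus>\<^bsub>P\<^esub> monom P \<one> 1 \<otimes>\<^bsub>P\<^esub> poly_shift f) n"
  proof (cases n)
    case 0 then show ?thesis using f poly_shift_closed[OF f] by simp
  next
    case (Suc m)
    have "coeff P (monom P \<one> 1 \<otimes>\<^bsub>P\<^esub> poly_shift f) (m + 1) = \<one> \<otimes> coeff P (poly_shift f) m"
      by (rule coeff_monom_mult[OF R.one_closed poly_shift_closed[OF f]])
    then show ?thesis using Suc f poly_shift_closed[OF f] by (simp add: coeff_poly_shift)
  qed
qed (use f poly_shift_closed[OF f] in auto)

lemma loc_frac_poly_decomp:
  assumes f: "f \<in> carrier P"
  shows "loc_frac P (polyA R) f \<one>\<^bsub>P\<^esub>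
    = loc_const (coeff P f 0) \<oplus>\<^bsub>T\<^esub> loc_X \<otimes>\<^bsub>T\<^esub> loc_frac P (polyA R) (poly_shift f) \<one>\<^bsub>P\<^esub>"
proof -
  interpret h: ring_hom_ring P T "\<lambda>a. loc_frac P (polyA R) a \<one>\<^bsub>P\<^esub>"
    by (rule A.loc_frac_ring_hom_ring)
  have "loc_frac P (polyA R) f \<one>\<^bsub>P\<^esub> = loc_frac P (polyA R)
      (monom P (coeff P f 0) 0 \<oplus>\<^bsub>P\<^esub> monom P \<one> 1 \<otimes>\<^bsub>P\<^esub> poly_shift f) \<one>\<^bsub>P\<^esub>"
    by (rule arg_cong[OF poly_shift_decomp[OF f]])
  then show ?thesis
    using f poly_shift_closed[OF f] unfolding loc_const_def loc_X_def by simp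
qed

lemma localization_decomp:
  assumes F: "F \<in> carrier T"
  obtains G where "G \<in> carrier T" "F = loc_const (loc_eval0 R F) \<oplus>\<^bsub>T\<^esub> loc_X \<otimes>\<^bsub>T\<^esub> G"
proof -
  interpret T: cring T by (rule A.localization_cring)
  interpret h: ring_hom_ring P T "\<lambda>a. loc_frac P (polyA R) a \<one>\<^bsub>P\<^esub>"
    by (rule A.loc_frac_ring_hom_ring)
  interpret c: ring_hom_ring R T loc_const
    by (rule ring_hom_ringI2[OF R.ring_axioms T.ring_axioms loc_const_ring_hom])
  obtain f s where fs: "F = loc_frac P (polyA R) f s" "f \<in> carrier P" "s \<in> polyA R"
    using F by (rule A.localization_carrierE)
  define c where "c = coeff P f 0"
  define g where "g = f \<ominus>\<^bsub>P\<^esub> monom P c 0 \<otimes>\<^bsub>P\<^esub> s"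
  have c: "c \<in> carrier R" and s: "s \<in> carrier P" and g: "g \<in> carrier P"
    using fs by (simp_all add: c_def g_def polyA_mem_iff)
  have "coeff P (monom P c 0 \<otimes>\<^bsub>P\<^esub> s) 0 = c"
    using coeff_monom_mult[OF c s, of 0 0] c fs(3) by (simp add: polyA_mem_iff)
  then have "coeff P g 0 = \<zero>" using fs c s unfolding g_def by (simp add: c_def)
  then have g_frac: "loc_frac P (polyA R) g \<one>\<^bsub>P\<^esub> = loc_X \<otimes>\<^bsub>T\<^esub> loc_frac P (polyA R) (poly_shift g) \<one>\<^bsub>P\<^esub>"
    using loc_frac_poly_decomp[OF g] loc_X_closed poly_shift_closed[OF g] by simp
  have "f = monom P c 0 \<otimes>\<^bsub>P\<^esub> s \<oplus>\<^bsub>P\<^esub> g"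
    using fs c s unfolding g_def a_minus_def by (simp add: P.add.m_lcomm P.r_neg)
  then have f_frac: "loc_frac P (polyA R) f \<one>\<^bsub>P\<^esub>
      = loc_const c \<otimes>\<^bsub>T\<^esub> loc_frac P (polyA R) s \<one>\<^bsub>P\<^esub> \<oplus>\<^bsub>T\<^esub> loc_frac P (polyA R) g \<one>\<^bsub>P\<^esub>"
    using c s g unfolding loc_const_def by (simp add: h.hom_add h.hom_mult)
  have inv: "loc_frac P (polyA R) s \<one>\<^bsub>P\<^esub> \<otimes>\<^bsub>T\<^esub> loc_frac P (polyA R) \<one>\<^bsub>P\<^esub> s = \<one>\<^bsub>T\<^esub>"
    by (rule A.loc_frac_mult_inverse[OF fs(3)])
  define G where "G = loc_frac P (polyA R) (poly_shift g) \<one>\<^bsub>P\<^esub> \<otimes>\<^bsub>T\<^esub> loc_frac P (polyA R) \<one>\<^bsub>P\<^esub> s"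
  have closed: "loc_frac P (polyA R) (poly_shift g) \<one>\<^bsub>P\<^esub> \<in> carrier T"
    "loc_frac P (polyA R) \<one>\<^bsub>P\<^esub> s \<in> carrier T" "loc_frac P (polyA R) s \<one>\<^bsub>P\<^esub> \<in> carrier T"
    "loc_const c \<in> carrier T"
    using poly_shift_closed[OF g] fs(3) s c by (simp_all add: A.loc_frac_closed)
  have "F = loc_frac P (polyA R) f \<one>\<^bsub>P\<^esub> \<otimes>\<^bsub>T\<^esub> loc_frac P (polyA R) \<one>\<^bsub>P\<^esub> s"
    unfolding fs(1) by (rule A.loc_frac_split[OF fs(2,3)])
  also have "\<dots> = loc_const c \<otimes>\<^bsub>T\<^esub> (loc_frac P (polyA R) s \<one>\<^bsub>P\<^esub> \<otimes>\<^bsub>T\<^esub> loc_frac P (polyA R) \<one>\<^bsub>P\<^esub> s)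
      \<oplus>\<^bsub>T\<^esub> loc_X \<otimes>\<^bsub>T\<^esub> G"
    unfolding f_frac g_frac G_def using closed loc_X_closed by (simp add: T.l_distr T.m_assoc)
  also have "\<dots> = loc_const (loc_eval0 R F) \<oplus>\<^bsub>T\<^esub> loc_X \<otimes>\<^bsub>T\<^esub> G"
    using inv closed fs by (simp add: loc_eval0_frac c_def)
  finally have "F = loc_const (loc_eval0 R F) \<oplus>\<^bsub>T\<^esub> loc_X \<otimes>\<^bsub>T\<^esub> G" .
  moreover have "G \<in> carrier T" unfolding G_def using closed by simp
  ultimately show ?thesis using that by blast
qed

lemma loc_Units_if_eval0_eq_one:
  assumes F: "F \<in> carrier T" and one: "loc_eval0 R F = \<one>"
  shows "F \<in> Units T"
proof -
  interpret T: cring T by (rule A.localization_cring)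
  obtain f s where fs: "F = loc_frac P (polyA R) f s" "f \<in> carrier P" "s \<in> polyA R"
    using F by (rule A.localization_carrierE)
  have "f \<in> polyA R" using fs one by (simp add: polyA_mem_iff loc_eval0_frac)
  then show ?thesis
    using A.loc_frac_split[OF fs(2,3)] A.loc_frac_Units fs by simp
qed

section \<open>Residue domains of $R[X]_A$\<close>

lemma residue_Units_if_eval0_notin:
  assumes Q: "ideal Q T" and p: "maximalideal p R" and pQ: "loc_const ` p \<subseteq> Q"
    and F: "F \<in> carrier T" and notin: "loc_eval0 R F \<notin> p"
  shows "Q +>\<^bsub>T\<^esub> F \<in> Units (T Quot Q)"
proof -
  interpret T: cring T by (rule A.localization_cring)
  interpret Q: ideal Q T by (rule Q)
  interpret D: cring "T Quot Q" by (rule Q.quotient_is_cring[OF T.is_cring])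
  interpret cls: ring_hom_ring T "T Quot Q" "(+>\<^bsub>T\<^esub>) Q" by (rule Q.rcos_ring_hom_ring)
  interpret ev: ring_hom_ring T R "loc_eval0 R" by (rule loc_eval0_ring_hom_ring)
  interpret const: ring_hom_ring R T loc_const by (rule loc_const_ring_hom_ring)
  define c where "c = loc_eval0 R F"
  have c: "c \<in> carrier R" unfolding c_def using F by simp
  obtain d where d: "d \<in> carrier R" "d \<otimes> c \<ominus> \<one> \<in> p"
    using R.maximalideal_inverse_mod[OF p c] notin unfolding c_def by blast
  define k where "k = d \<otimes> c \<ominus> \<one>"
  have k: "k \<in> carrier R" "loc_const k \<in> Q" using pQ d c unfolding k_def by auto
  define E where "E = loc_const d \<otimes>\<^bsub>T\<^esub> F \<ominus>\<^bsub>T\<^esub> loc_const k"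
  have E: "E \<in> carrier T" unfolding E_def using k d F by simp
  have "loc_eval0 R E = d \<otimes> c \<ominus> k"
    unfolding E_def using k d F by (simp add: a_minus_def loc_eval0_const c_def)
  also have "\<dots> = \<one>" unfolding k_def using c d by algebra
  finally have "Q +>\<^bsub>T\<^esub> E \<in> Units (T Quot Q)"
    using ring_hom_Units[OF cls.homh T.monoid_axioms] loc_Units_if_eval0_eq_one[OF E] by blast
  moreover have "Q +>\<^bsub>T\<^esub> loc_const k = \<zero>\<^bsub>T Quot Q\<^esub>"
    using k Q.rcos_eq_ideal_iff Q.FactRing_zero by simp
  then have "Q +>\<^bsub>T\<^esub> E = (Q +>\<^bsub>T\<^esub> F) \<otimes>\<^bsub>T Quot Q\<^esub> (Q +>\<^bsub>T\<^esub> loc_const d)"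
    unfolding E_def using k d F by (simp add: a_minus_def D.m_comm)
  ultimately have "(Q +>\<^bsub>T\<^esub> F) \<otimes>\<^bsub>T Quot Q\<^esub> (Q +>\<^bsub>T\<^esub> loc_const d) \<in> Units (T Quot Q)"
    by simp
  then show ?thesis by (rule D.unit_factor) (use F d in simp_all)
qed

lemma residue_poly_eq_X_mult_shift:
  assumes Q: "ideal Q T" and pQ: "loc_const ` p \<subseteq> Q" and f: "f \<in> carrier P"
    and f0: "coeff P f 0 \<in> p"
  shows "Q +>\<^bsub>T\<^esub> loc_frac P (polyA R) f \<one>\<^bsub>P\<^esub>
    = (Q +>\<^bsub>T\<^esub> loc_X) \<otimes>\<^bsub>T Quot Q\<^esub> (Q +>\<^bsub>T\<^esub> loc_frac P (polyA R) (poly_shift f) \<one>\<^bsub>P\<^esub>)"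
proof -
  interpret T: cring T by (rule A.localization_cring)
  interpret Q: ideal Q T by (rule Q)
  interpret D: cring "T Quot Q" by (rule Q.quotient_is_cring[OF T.is_cring])
  interpret cls: ring_hom_ring T "T Quot Q" "(+>\<^bsub>T\<^esub>) Q" by (rule Q.rcos_ring_hom_ring)
  have "loc_const (coeff P f 0) \<in> Q" using pQ f0 by blast
  then have "Q +>\<^bsub>T\<^esub> loc_const (coeff P f 0) = \<zero>\<^bsub>T Quot Q\<^esub>"
    unfolding Q.FactRing_zero using Q.rcos_eq_ideal_iff Q.Icarr by blast
  then show ?thesis
    using loc_frac_poly_decomp[OF f] loc_X_closed f poly_shift_closed[OF f]
    by (simp add: loc_const_def A.loc_frac_closed)
qed

lemma residue_poly_unit_power:
  assumes Q: "ideal Q T" and p: "maximalideal p R" and pQ: "loc_const ` p \<subseteq> Q"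
    and f: "f \<in> carrier P"
  defines "D \<equiv> T Quot Q" and "x \<equiv> Q +>\<^bsub>T\<^esub> loc_X"
  shows "Q +>\<^bsub>T\<^esub> loc_frac P (polyA R) f \<one>\<^bsub>P\<^esub> = \<zero>\<^bsub>D\<^esub> \<or>
    (\<exists>u\<in>Units D. \<exists>n::nat. Q +>\<^bsub>T\<^esub> loc_frac P (polyA R) f \<one>\<^bsub>P\<^esub> = u \<otimes>\<^bsub>D\<^esub> x [^]\<^bsub>D\<^esub> n)"
    (is "?NF f")
proof -
  interpret T: cring T by (rule A.localization_cring)
  interpret Q: ideal Q T by (rule Q)
  interpret D: cring D unfolding D_def by (rule Q.quotient_is_cring[OF T.is_cring])
  interpret cls: ring_hom_ring T D "(+>\<^bsub>T\<^esub>) Q" unfolding D_def by (rule Q.rcos_ring_hom_ring)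
  have x: "x \<in> carrier D" unfolding x_def using loc_X_closed by simp
  have bounded: "?NF f" if "f \<in> carrier P" "\<forall>m\<ge>N. coeff P f m = \<zero>" for N f
    using that
  proof (induction N arbitrary: f)
    case 0
    then have "f = \<zero>\<^bsub>P\<^esub>" by (intro up_eqI) auto
    then show ?case by (simp add: A.localization_zero[symmetric])
  next
    case (Suc N)
    let ?g = "loc_frac P (polyA R) (poly_shift f) \<one>\<^bsub>P\<^esub>"
    have F: "loc_frac P (polyA R) f \<one>\<^bsub>P\<^esub> \<in> carrier T" using Suc.prems(1) by (simp add: A.loc_frac_closed)
    show ?case
    proof (cases "coeff P f 0 \<in> p")
      case True
      then have split: "Q +>\<^bsub>T\<^esub> loc_frac P (polyA R) f \<one>\<^bsub>P\<^esub> = x \<otimes>\<^bsub>D\<^esub> (Q +>\<^bsub>T\<^esub> ?g)"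
        unfolding D_def x_def by (rule residue_poly_eq_X_mult_shift[OF Q pQ Suc.prems(1)])
      have "?NF (poly_shift f)"
        using Suc.IH poly_shift_closed Suc.prems by (simp add: coeff_poly_shift)
      then show ?thesis
      proof
        assume "Q +>\<^bsub>T\<^esub> ?g = \<zero>\<^bsub>D\<^esub>"
        then show ?thesis using split x by simp
      next
        assume "\<exists>u\<in>Units D. \<exists>n::nat. Q +>\<^bsub>T\<^esub> ?g = u \<otimes>\<^bsub>D\<^esub> x [^]\<^bsub>D\<^esub> n"
        then obtain u and n :: nat where u: "u \<in> Units D" "Q +>\<^bsub>T\<^esub> ?g = u \<otimes>\<^bsub>D\<^esub> x [^]\<^bsub>D\<^esub> n"
          by blast
        then have "Q +>\<^bsub>T\<^esub> loc_frac P (polyA R) f \<one>\<^bsub>P\<^esub> = u \<otimes>\<^bsub>D\<^esub> x [^]\<^bsub>D\<^esub> Suc n"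
          using split x D.Units_closed by (simp add: D.m_ac)
        then show ?thesis using u(1) by blast
      qed
    next
      case False
      then have "Q +>\<^bsub>T\<^esub> loc_frac P (polyA R) f \<one>\<^bsub>P\<^esub> \<in> Units D"
        using residue_Units_if_eval0_notin[OF Q p pQ F] Suc.prems(1) unfolding D_def
        by (simp add: loc_eval0_frac)
      moreover have "Q +>\<^bsub>T\<^esub> loc_frac P (polyA R) f \<one>\<^bsub>P\<^esub>
          = (Q +>\<^bsub>T\<^esub> loc_frac P (polyA R) f \<one>\<^bsub>P\<^esub>) \<otimes>\<^bsub>D\<^esub> x [^]\<^bsub>D\<^esub> (0::nat)"
        using F by simp
      ultimately show ?thesis by blast
    qed
  qed
  obtain N where "bound \<zero> N f" using f by (auto simp: P_def UP_def)
  then have "\<forall>m\<ge>Suc N. coeff P f m = \<zero>" using f by (simp add: bound_def P_def UP_def)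
  then show ?thesis using bounded f by blast
qed

lemma residue_unit_power_generated:
  assumes Q: "ideal Q T" and p: "maximalideal p R" and pQ: "loc_const ` p \<subseteq> Q"
  shows "unit_power_generated (T Quot Q) (Q +>\<^bsub>T\<^esub> loc_X)"
  unfolding unit_power_generated_def
proof
  interpret T: cring T by (rule A.localization_cring)
  interpret Q: ideal Q T by (rule Q)
  interpret D: cring "T Quot Q" by (rule Q.quotient_is_cring[OF T.is_cring])
  interpret cls: ring_hom_ring T "T Quot Q" "(+>\<^bsub>T\<^esub>) Q" by (rule Q.rcos_ring_hom_ring)
  fix y assume "y \<in> carrier (T Quot Q)"
  then obtain F where "F \<in> carrier T" "y = Q +>\<^bsub>T\<^esub> F" by (rule Q.FactRing_carrierE)
  then obtain f s where y: "y = Q +>\<^bsub>T\<^esub> loc_frac P (polyA R) f s" and f: "f \<in> carrier P"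
    and s: "s \<in> polyA R"
    by (auto elim: A.localization_carrierE)
  let ?w = "Q +>\<^bsub>T\<^esub> loc_frac P (polyA R) \<one>\<^bsub>P\<^esub> s"
  have w: "?w \<in> Units (T Quot Q)"
    by (rule ring_hom_Units[OF cls.homh T.monoid_axioms A.loc_frac_Units(2)[OF s]])
  have y_split: "y = (Q +>\<^bsub>T\<^esub> loc_frac P (polyA R) f \<one>\<^bsub>P\<^esub>) \<otimes>\<^bsub>T Quot Q\<^esub> ?w"
    unfolding y A.loc_frac_split[OF f s] using f s by (simp add: A.loc_frac_closed)
  from residue_poly_unit_power[OF Q p pQ f]
  show "y = \<zero>\<^bsub>T Quot Q\<^esub> \<or> (\<exists>u\<in>Units (T Quot Q). \<exists>n::nat.
      y = u \<otimes>\<^bsub>T Quot Q\<^esub> (Q +>\<^bsub>T\<^esub> loc_X) [^]\<^bsub>T Quot Q\<^esub> n)"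
  proof
    assume "Q +>\<^bsub>T\<^esub> loc_frac P (polyA R) f \<one>\<^bsub>P\<^esub> = \<zero>\<^bsub>T Quot Q\<^esub>"
    then show ?thesis using y_split D.Units_closed[OF w] by simp
  next
    assume "\<exists>u\<in>Units (T Quot Q). \<exists>n::nat.
      Q +>\<^bsub>T\<^esub> loc_frac P (polyA R) f \<one>\<^bsub>P\<^esub> = u \<otimes>\<^bsub>T Quot Q\<^esub> (Q +>\<^bsub>T\<^esub> loc_X) [^]\<^bsub>T Quot Q\<^esub> n"
    then obtain u and n :: nat where u: "u \<in> Units (T Quot Q)"
      "Q +>\<^bsub>T\<^esub> loc_frac P (polyA R) f \<one>\<^bsub>P\<^esub> = u \<otimes>\<^bsub>T Quot Q\<^esub> (Q +>\<^bsub>T\<^esub> loc_X) [^]\<^bsub>T Quot Q\<^esub> n"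
      by blast
    have "y = (u \<otimes>\<^bsub>T Quot Q\<^esub> ?w) \<otimes>\<^bsub>T Quot Q\<^esub> (Q +>\<^bsub>T\<^esub> loc_X) [^]\<^bsub>T Quot Q\<^esub> n"
      using y_split u w loc_X_closed by (simp add: D.m_ac D.Units_closed)
    moreover have "u \<otimes>\<^bsub>T Quot Q\<^esub> ?w \<in> Units (T Quot Q)" using u(1) w by simp
    ultimately show ?thesis by blast
  qed
qed

definition poly_ideal where "poly_ideal p = {f \<in> carrier P. \<forall>n. coeff P f n \<in> p}"

lemma poly_ideal_ideal:
  assumes I: "ideal p R" shows "ideal (poly_ideal p) P"
proof -
  interpret I: ideal p R by (rule I)
  show ?thesis
  proof (rule P.idealI')
    show "poly_ideal p \<subseteq> carrier P" unfolding poly_ideal_def by auto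
    show "\<zero>\<^bsub>P\<^esub> \<in> poly_ideal p" unfolding poly_ideal_def by simp
  next
    fix f g assume "f \<in> poly_ideal p" "g \<in> poly_ideal p"
    then show "f \<oplus>\<^bsub>P\<^esub> g \<in> poly_ideal p" unfolding poly_ideal_def by (simp add: I.a_closed)
  next
    fix f assume "f \<in> poly_ideal p"
    then show "\<ominus>\<^bsub>P\<^esub> f \<in> poly_ideal p" unfolding poly_ideal_def by (simp add: I.a_inv_closed)
  next
    fix f g assume f: "f \<in> poly_ideal p" and g: "g \<in> carrier P"
    have fc: "f \<in> carrier P" using f unfolding poly_ideal_def by simp
    have "coeff P (g \<otimes>\<^bsub>P\<^esub> f) n \<in> p" for n
      using fc g by (simp, intro R.ideal_finsum_closed[OF I]) (use f I.I_l_closed poly_ideal_def in auto)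
    then show "g \<otimes>\<^bsub>P\<^esub> f \<in> poly_ideal p" using fc g unfolding poly_ideal_def by simp
    have "coeff P (f \<otimes>\<^bsub>P\<^esub> g) n \<in> p" for n
      using fc g by (simp, intro R.ideal_finsum_closed[OF I]) (use f I.I_r_closed poly_ideal_def in auto)
    then show "f \<otimes>\<^bsub>P\<^esub> g \<in> poly_ideal p" using fc g unfolding poly_ideal_def by simp
  qed
qed

lemma coeff_mult_mod_ideal:
  assumes I: "ideal p R" and f: "f \<in> carrier P" and g: "g \<in> carrier P"
    and below_f: "\<And>k. k < i \<Longrightarrow> coeff P f k \<in> p" and below_g: "\<And>k. k < j \<Longrightarrow> coeff P g k \<in> p"
    and fg: "coeff P (f \<otimes>\<^bsub>P\<^esub> g) (i + j) \<in> p"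
  shows "coeff P f i \<otimes> coeff P g j \<in> p"
proof -
  interpret I: ideal p R by (rule I)
  define t where "t = (\<lambda>k. coeff P f k \<otimes> coeff P g (i + j - k))"
  define A where "A = {..i + j} - {i}"
  have tc: "t \<in> A \<rightarrow> carrier R" "t i \<in> carrier R" unfolding t_def using f g by auto
  have rest: "finsum R t A \<in> p"
  proof (rule R.ideal_finsum_closed[OF I])
    show "finite A" unfolding A_def by simp
    fix k assume k: "k \<in> A"
    show "t k \<in> p"
    proof (cases "k < i")
      case True then show ?thesis unfolding t_def using below_f g f by (simp add: I.I_r_closed)
    next
      case False
      then have "i + j - k < j" using k unfolding A_def by auto
      then show ?thesis unfolding t_def using below_g g f by (simp add: I.I_l_closed)
    qed
  qed
  have "{..i + j} = insert i A" unfolding A_def by auto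
  then have "coeff P (f \<otimes>\<^bsub>P\<^esub> g) (i + j) = t i \<oplus> finsum R t A"
    using f g tc R.finsum_insert[of A i t] unfolding t_def A_def by simp
  then have "t i \<oplus> finsum R t A \<in> p" using fg by simp
  moreover have "t i = (t i \<oplus> finsum R t A) \<ominus> finsum R t A"
    using tc R.finsum_closed[OF tc(1)] by algebra
  ultimately have "t i \<in> p" using rest by (metis I.a_closed I.a_inv_closed a_minus_def)
  then show ?thesis unfolding t_def by simp
qed

lemma poly_ideal_primeideal:
  assumes p: "primeideal p R" shows "primeideal (poly_ideal p) P"
proof (rule primeidealI[OF poly_ideal_ideal[OF primeideal.axioms(1)[OF p]] P.is_cring])
  interpret p: primeideal p R by (rule p)
  have "coeff P \<one>\<^bsub>P\<^esub> 0 \<notin> p" using p.I_notcarr p.one_imp_carrier by auto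
  then show "carrier P \<noteq> poly_ideal p" unfolding poly_ideal_def using P.one_closed by blast
next
  interpret p: primeideal p R by (rule p)
  fix f g assume f: "f \<in> carrier P" and g: "g \<in> carrier P" and fg: "f \<otimes>\<^bsub>P\<^esub> g \<in> poly_ideal p"
  show "f \<in> poly_ideal p \<or> g \<in> poly_ideal p"
  proof (rule ccontr)
    assume "\<not> (f \<in> poly_ideal p \<or> g \<in> poly_ideal p)"
    then have ex: "\<exists>i. coeff P f i \<notin> p" "\<exists>j. coeff P g j \<notin> p"
      using f g unfolding poly_ideal_def by auto
    define i where "i = (LEAST i. coeff P f i \<notin> p)"
    define j where "j = (LEAST j. coeff P g j \<notin> p)"
    have "coeff P f i \<notin> p" "coeff P g j \<notin> p"
      unfolding i_def j_def by (rule LeastI_ex[OF ex(1)], rule LeastI_ex[OF ex(2)])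
    moreover have "coeff P f i \<otimes> coeff P g j \<in> p"
    proof (rule coeff_mult_mod_ideal[OF p.is_ideal f g])
      show "coeff P f k \<in> p" if "k < i" for k using not_less_Least[OF that[unfolded i_def]] by blast
      show "coeff P g k \<in> p" if "k < j" for k using not_less_Least[OF that[unfolded j_def]] by blast
      show "coeff P (f \<otimes>\<^bsub>P\<^esub> g) (i + j) \<in> p" using fg unfolding poly_ideal_def by blast
    qed
    ultimately show False using p.I_prime[OF coeff_closed[OF f] coeff_closed[OF g]] by blast
  qed
qed

lemma residue_X_divides_iff:
  assumes Q: "ideal Q T" and pQ: "loc_const ` p \<subseteq> Q" and Qp: "loc_eval0 R ` Q \<subseteq> p"
    and F: "F \<in> carrier T"
  shows "(Q +>\<^bsub>T\<^esub> loc_X) divides\<^bsub>T Quot Q\<^esub> (Q +>\<^bsub>T\<^esub> F) \<longleftrightarrow> loc_eval0 R F \<in> p"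
proof -
  interpret T: cring T by (rule A.localization_cring)
  interpret Q: ideal Q T by (rule Q)
  interpret D: cring "T Quot Q" by (rule Q.quotient_is_cring[OF T.is_cring])
  interpret cls: ring_hom_ring T "T Quot Q" "(+>\<^bsub>T\<^esub>) Q" by (rule Q.rcos_ring_hom_ring)
  interpret ev: ring_hom_ring T R "loc_eval0 R" by (rule loc_eval0_ring_hom_ring)
  show ?thesis
  proof
    assume "(Q +>\<^bsub>T\<^esub> loc_X) divides\<^bsub>T Quot Q\<^esub> (Q +>\<^bsub>T\<^esub> F)"
    then obtain z where z: "z \<in> carrier (T Quot Q)" "Q +>\<^bsub>T\<^esub> F = (Q +>\<^bsub>T\<^esub> loc_X) \<otimes>\<^bsub>T Quot Q\<^esub> z"
      by (auto elim: dividesE)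
    obtain Z where Z: "Z \<in> carrier T" "z = Q +>\<^bsub>T\<^esub> Z" using z(1) by (rule Q.FactRing_carrierE)
    have "Q +>\<^bsub>T\<^esub> (F \<ominus>\<^bsub>T\<^esub> loc_X \<otimes>\<^bsub>T\<^esub> Z) = \<zero>\<^bsub>T Quot Q\<^esub>"
      using F Z z loc_X_closed by (simp add: a_minus_def D.r_neg)
    then have "F \<ominus>\<^bsub>T\<^esub> loc_X \<otimes>\<^bsub>T\<^esub> Z \<in> Q"
      using Q.rcos_eq_ideal_iff F Z loc_X_closed Q.FactRing_zero by simp
    then have "loc_eval0 R (F \<ominus>\<^bsub>T\<^esub> loc_X \<otimes>\<^bsub>T\<^esub> Z) \<in> p" using Qp by blast
    then show "loc_eval0 R F \<in> p"
      using F Z loc_X_closed by (simp add: a_minus_def loc_eval0_X)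
  next
    assume "loc_eval0 R F \<in> p"
    then have "Q +>\<^bsub>T\<^esub> loc_const (loc_eval0 R F) = \<zero>\<^bsub>T Quot Q\<^esub>"
      using pQ Q.rcos_eq_ideal_iff Q.Icarr Q.FactRing_zero by blast
    obtain G where G: "G \<in> carrier T" "F = loc_const (loc_eval0 R F) \<oplus>\<^bsub>T\<^esub> loc_X \<otimes>\<^bsub>T\<^esub> G"
      using F by (rule localization_decomp)
    have "loc_const (loc_eval0 R F) \<in> carrier T"
      using F ring_hom_closed[OF loc_const_ring_hom] by simp
    moreover have "Q +>\<^bsub>T\<^esub> F = Q +>\<^bsub>T\<^esub> (loc_const (loc_eval0 R F) \<oplus>\<^bsub>T\<^esub> loc_X \<otimes>\<^bsub>T\<^esub> G)"
      using G(2) by (rule arg_cong)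
    ultimately have "Q +>\<^bsub>T\<^esub> F = (Q +>\<^bsub>T\<^esub> loc_X) \<otimes>\<^bsub>T Quot Q\<^esub> (Q +>\<^bsub>T\<^esub> G)"
      using \<open>Q +>\<^bsub>T\<^esub> loc_const (loc_eval0 R F) = \<zero>\<^bsub>T Quot Q\<^esub>\<close> G(1) loc_X_closed by simp
    then show "(Q +>\<^bsub>T\<^esub> loc_X) divides\<^bsub>T Quot Q\<^esub> (Q +>\<^bsub>T\<^esub> F)"
      using G(1) by (auto intro: dividesI)
  qed
qed

lemma residue_X_ring_prime:
  assumes Q: "primeideal Q T" and p: "primeideal p R"
    and pQ: "loc_const ` p \<subseteq> Q" and Qp: "loc_eval0 R ` Q \<subseteq> p" and X: "loc_X \<notin> Q"
  shows "ring_prime\<^bsub>T Quot Q\<^esub> (Q +>\<^bsub>T\<^esub> loc_X)"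
proof -
  interpret T: cring T by (rule A.localization_cring)
  interpret Q: primeideal Q T by (rule Q)
  interpret p: primeideal p R by (rule p)
  interpret D: domain "T Quot Q" by (rule Q.quotient_is_domain)
  interpret cls: ring_hom_ring T "T Quot Q" "(+>\<^bsub>T\<^esub>) Q" by (rule Q.rcos_ring_hom_ring)
  interpret ev: ring_hom_ring T R "loc_eval0 R" by (rule loc_eval0_ring_hom_ring)
  note divides_iff = residue_X_divides_iff[OF Q.is_ideal pQ Qp]
  have x: "Q +>\<^bsub>T\<^esub> loc_X \<in> carrier (T Quot Q)" using loc_X_closed by simp
  have nonzero: "Q +>\<^bsub>T\<^esub> loc_X \<noteq> \<zero>\<^bsub>T Quot Q\<^esub>"
    using X loc_X_closed Q.rcos_eq_ideal_iff Q.FactRing_zero by simp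
  have nonunit: "Q +>\<^bsub>T\<^esub> loc_X \<notin> Units (T Quot Q)"
    using divides_iff[OF T.one_closed] D.divides_one[OF x] p.I_notcarr p.one_imp_carrier by auto
  have prime: "(Q +>\<^bsub>T\<^esub> loc_X) divides\<^bsub>T Quot Q\<^esub> b \<or> (Q +>\<^bsub>T\<^esub> loc_X) divides\<^bsub>T Quot Q\<^esub> c"
    if bc: "b \<in> carrier (T Quot Q)" "c \<in> carrier (T Quot Q)"
      and dvd: "(Q +>\<^bsub>T\<^esub> loc_X) divides\<^bsub>T Quot Q\<^esub> b \<otimes>\<^bsub>T Quot Q\<^esub> c" for b c
  proof -
    obtain B C where B: "B \<in> carrier T" "b = Q +>\<^bsub>T\<^esub> B" and C: "C \<in> carrier T" "c = Q +>\<^bsub>T\<^esub> C"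
      using bc by (meson Q.FactRing_carrierE)
    have "loc_eval0 R (B \<otimes>\<^bsub>T\<^esub> C) \<in> p" using divides_iff[of "B \<otimes>\<^bsub>T\<^esub> C"] B C dvd by simp
    then have "loc_eval0 R B \<in> p \<or> loc_eval0 R C \<in> p" using B C p.I_prime by simp
    then show ?thesis unfolding B(2) C(2) using divides_iff[OF B(1)] divides_iff[OF C(1)] by blast
  qed
  show ?thesis unfolding ring_prime_def by (rule conjI[OF nonzero primeI[OF nonunit prime]])
qed

lemma poly_ideal_disjoint_polyA:
  assumes "primeideal p R" shows "poly_ideal p \<inter> polyA R = {}"
proof -
  have "\<one> \<notin> p"
    using assms primeideal.I_notcarr ideal.one_imp_carrier primeideal.axioms(1) by blast
  then show ?thesis unfolding poly_ideal_def by (auto simp: polyA_mem_iff) (metis)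
qed

lemma loc_poly_ideal_primeideal:
  assumes p: "primeideal p R"
  shows "primeideal (loc_extension P (polyA R) (poly_ideal p)) T"
  by (rule A.loc_extension_primeideal[OF poly_ideal_primeideal[OF p] poly_ideal_disjoint_polyA[OF p]])

lemma loc_poly_ideal_mem_iff:
  assumes p: "primeideal p R" and f: "f \<in> carrier P" and s: "s \<in> polyA R"
  shows "loc_frac P (polyA R) f s \<in> loc_extension P (polyA R) (poly_ideal p) \<longleftrightarrow> f \<in> poly_ideal p"
  by (rule A.loc_extension_mem_iff[OF poly_ideal_primeideal[OF p] poly_ideal_disjoint_polyA[OF p] f s])

lemma loc_poly_ideal_facts:
  assumes p: "primeideal p R"
  shows "loc_const ` p \<subseteq> loc_extension P (polyA R) (poly_ideal p)"
    and "loc_eval0 R ` loc_extension P (polyA R) (poly_ideal p) \<subseteq> p"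
    and "loc_X \<notin> loc_extension P (polyA R) (poly_ideal p)"
proof -
  interpret p: primeideal p R by (rule p)
  show "loc_const ` p \<subseteq> loc_extension P (polyA R) (poly_ideal p)"
    using loc_poly_ideal_mem_iff[OF p] p.Icarr unfolding loc_const_def
    by (auto simp: poly_ideal_def A.S.one_closed)
  show "loc_eval0 R ` loc_extension P (polyA R) (poly_ideal p) \<subseteq> p"
    unfolding loc_extension_def poly_ideal_def by (auto simp: loc_eval0_frac)
  show "loc_X \<notin> loc_extension P (polyA R) (poly_ideal p)"
    using loc_poly_ideal_mem_iff[OF p] p.I_notcarr p.one_imp_carrier unfolding loc_X_def
    by (auto simp: poly_ideal_def A.S.one_closed)
qed

lemma exists_residue_not_valuation_not_prufer:
  assumes p: "primeideal p R" and not_max: "\<not> maximalideal p R"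
  obtains Q where "primeideal Q T" "\<not> valuation_domain (T Quot Q)" "\<not> prufer_domain (T Quot Q)"
proof -
  interpret p: primeideal p R by (rule p)
  obtain J where J: "ideal J R" "p \<subseteq> J" "J \<noteq> p" "J \<noteq> carrier R"
    using not_max maximalidealI[OF p.is_ideal p.I_notcarr] by blast
  interpret J: ideal J R by (rule J(1))
  obtain a where a: "a \<in> J" "a \<notin> p" using J(2,3) by blast
  have a_carr: "a \<in> carrier R" by (rule J.Icarr[OF a(1)])
  define Q where "Q = loc_extension P (polyA R) (poly_ideal p)"
  interpret T: cring T by (rule A.localization_cring)
  interpret Q: primeideal Q T unfolding Q_def by (rule loc_poly_ideal_primeideal[OF p])
  interpret D: domain "T Quot Q" by (rule Q.quotient_is_domain)
  interpret cls: ring_hom_ring T "T Quot Q" "(+>\<^bsub>T\<^esub>) Q" by (rule Q.rcos_ring_hom_ring)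
  interpret ev: ring_hom_ring T R "loc_eval0 R" by (rule loc_eval0_ring_hom_ring)
  interpret const: ring_hom_ring R T loc_const by (rule loc_const_ring_hom_ring)
  have pQ: "loc_const ` p \<subseteq> Q" and Qp: "loc_eval0 R ` Q \<subseteq> p" and X: "loc_X \<notin> Q"
    unfolding Q_def using loc_poly_ideal_facts[OF p] by blast+
  note divides_iff = residue_X_divides_iff[OF Q.is_ideal pQ Qp]
  have "\<not> (Q +>\<^bsub>T\<^esub> loc_X) divides\<^bsub>T Quot Q\<^esub> (Q +>\<^bsub>T\<^esub> loc_const a)"
    using divides_iff a a_carr by (simp add: loc_eval0_const)
  moreover have "\<not> (Q +>\<^bsub>T\<^esub> loc_X) divides\<^bsub>T Quot Q\<^esub>
      (\<one>\<^bsub>T Quot Q\<^esub> \<ominus>\<^bsub>T Quot Q\<^esub> c \<otimes>\<^bsub>T Quot Q\<^esub> (Q +>\<^bsub>T\<^esub> loc_const a))"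
    if c: "c \<in> carrier (T Quot Q)" for c
  proof
    obtain C where C: "C \<in> carrier T" "c = Q +>\<^bsub>T\<^esub> C" using c by (rule Q.FactRing_carrierE)
    assume "(Q +>\<^bsub>T\<^esub> loc_X) divides\<^bsub>T Quot Q\<^esub>
      (\<one>\<^bsub>T Quot Q\<^esub> \<ominus>\<^bsub>T Quot Q\<^esub> c \<otimes>\<^bsub>T Quot Q\<^esub> (Q +>\<^bsub>T\<^esub> loc_const a))"
    then have "loc_eval0 R (\<one>\<^bsub>T\<^esub> \<ominus>\<^bsub>T\<^esub> C \<otimes>\<^bsub>T\<^esub> loc_const a) \<in> p"
      using divides_iff[of "\<one>\<^bsub>T\<^esub> \<ominus>\<^bsub>T\<^esub> C \<otimes>\<^bsub>T\<^esub> loc_const a"] C a_carr by (simp add: a_minus_def)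
    then have "\<one> \<ominus> loc_eval0 R C \<otimes> a \<in> p" using C a_carr by (simp add: a_minus_def loc_eval0_const)
    then have "\<one> \<ominus> loc_eval0 R C \<otimes> a \<in> J" using J(2) by blast
    moreover have "loc_eval0 R C \<otimes> a \<in> J" using J.I_l_closed[OF a(1)] C by simp
    ultimately have "\<one> \<ominus> loc_eval0 R C \<otimes> a \<oplus> loc_eval0 R C \<otimes> a \<in> J" by (rule J.a_closed)
    moreover have "\<one> \<ominus> loc_eval0 R C \<otimes> a \<oplus> loc_eval0 R C \<otimes> a = \<one>"
      using C a_carr by (simp add: a_minus_def R.a_assoc R.l_neg)
    ultimately show False using J(4) J.one_imp_carrier by simp
  qed
  moreover note residue_X_ring_prime[OF Q.primeideal_axioms p pQ Qp X]
  moreover have "Q +>\<^bsub>T\<^esub> loc_const a \<in> carrier (T Quot Q)" "Q +>\<^bsub>T\<^esub> loc_X \<in> carrier (T Quot Q)"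
    using a_carr loc_X_closed by simp_all
  ultimately show ?thesis
    using that Q.primeideal_axioms D.non_maximal_principal_prime_imp_not_valuation_domain
      D.non_maximal_principal_prime_imp_not_prufer_domain by blast
qed

lemma zero_dimensional_residue_domains:
  assumes zd: "zero_dimensional R" and Q: "primeideal Q T"
  shows "principal_domain (T Quot Q)" "valuation_domain (T Quot Q)"
proof -
  interpret T: cring T by (rule A.localization_cring)
  interpret Q: primeideal Q T by (rule Q)
  interpret D: domain "T Quot Q" by (rule Q.quotient_is_domain)
  have "primeideal {c \<in> carrier R. loc_const c \<in> Q} R"
    by (rule ring_hom_ring.primeideal_vimage[OF loc_const_ring_hom_ring R.is_cring Q])
  then have "maximalideal {c \<in> carrier R. loc_const c \<in> Q} R"
    using zd unfolding zero_dimensional_def by blast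
  then have "unit_power_generated (T Quot Q) (Q +>\<^bsub>T\<^esub> loc_X)"
    by (rule residue_unit_power_generated[OF Q.is_ideal]) blast
  moreover have "Q +>\<^bsub>T\<^esub> loc_X \<in> carrier (T Quot Q)"
    using ring_hom_closed[OF Q.rcos_ring_hom loc_X_closed] .
  ultimately show "principal_domain (T Quot Q)" "valuation_domain (T Quot Q)"
    using D.unit_power_generated_imp_principal_domain D.unit_power_generated_imp_valuation_domain
    by blast+
qed

end

theorem mainTheorem2:
  fixes R :: "('a, 'm) ring_scheme"
  assumes "cring R"
  shows "(residually principal_domain (RXA R) \<longleftrightarrow> zero_dimensional R)
       \<and> (residually valuation_domain (RXA R) \<longleftrightarrow> zero_dimensional R)
       \<and> (residually bezout_domain (RXA R) \<longleftrightarrow> zero_dimensional R)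
       \<and> (residually prufer_domain (RXA R) \<longleftrightarrow> zero_dimensional R)"
proof -
  interpret UP_cring R "UP R" by (intro UP_cring.intro assms)
  have RXA: "RXA R = T" by (simp add: RXA_def)
  have quotient_chain: "principal_domain (T Quot Q) \<Longrightarrow> bezout_domain (T Quot Q)"
    "bezout_domain (T Quot Q) \<Longrightarrow> prufer_domain (T Quot Q)" if "primeideal Q T" for Q
    using domain.principal_domain_imp_bezout_domain domain.bezout_domain_imp_prufer_domain
      primeideal.quotient_is_domain[OF that] by blast+
  show ?thesis
  proof (cases "zero_dimensional R")
    case True
    then show ?thesis
      unfolding residually_def RXA using zero_dimensional_residue_domains quotient_chain by blast
  next
    case False
    then obtain p where "primeideal p R" "\<not> maximalideal p R"
      unfolding zero_dimensional_def by blast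
    then obtain Q where "primeideal Q T" "\<not> valuation_domain (T Quot Q)" "\<not> prufer_domain (T Quot Q)"
      by (rule exists_residue_not_valuation_not_prufer)
    then show ?thesis
      unfolding residually_def RXA using False quotient_chain by blast
  qed
qed

end
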